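(* Let $M>0$, $T\ge1/M$, $y_0\in C^4([0,1])$, $v\in C^4([0,T])$, $\varepsilon\in(0,1)$. Let $y^\varepsilon$ solve $y_t-\varepsilon y_{xx}+My_x=0$ in $Q_T=(0,1)\times(0,T)$, $y(0,t)=v(t)$, $y(1,t)=0$, $y(x,0)=y_0(x)$; let $\widetilde P^\varepsilon$ be as in the context; let $\theta^\varepsilon$ solve $\theta_t+M\theta_x-\varepsilon\theta_{xx}=0$ in $Q_T$, $\theta(0,t)=\theta(1,t)=0$, $\theta(x,0)=\widetilde P^\varepsilon(x,0)-y_0(x)$ (with $\widetilde P^\varepsilon(x,0):=\lim_{t\to0^+}\widetilde P^\varepsilon(x,t)$); and set $z^\varepsilon=\widetilde P^\varepsilon-y^\varepsilon-\theta^\varepsilon$. There is a constant $c$ independent of $\varepsilon$ such that $$\|z^\varepsilon(0,\cdot)\|_{L^1(0,t)}\le c\,\varepsilon^2\quad\forall t\in(0,T].$$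
   Context: Notation: $\mathrm{erf}(s)=\frac{2}{\sqrt\pi}\int_0^s e^{-r^2}dr$, $\mathrm{erfc}=1-\mathrm{erf}$. Scaled variables: $w=\frac{x-Mt}{\sqrt\varepsilon}$, $z=\frac{1-x}{\varepsilon}$, $\tau=\frac{1/M-t}{\sqrt\varepsilon}$ (so $M\tau=\frac{1-Mt}{\sqrt\varepsilon}$). Constants: $c^+=y_0(0)$, $c^-=v(0)$, $d^+=y_0'(0)$, $d^-=-v'(0)/M$, $e^+=y_0''(0)$, $e^-=v''(0)/M^2$, $f^+=0$, $f^-=v''(0)/M^3$, $h^+=y_0'''(0)/6$, $h^-=-v'''(0)/(6M^3)$. For $(x,t)$ let $\sigma=+$ if $x>Mt$ and $\sigma=-$ if $x\le Mt$; for $t$ let $s=+$ if $Mt\le1$ and $s=-$ if $Mt>1$. Outer terms: $y^0(x,t)=y_0(x-Mt)$ if $x>Mt$, $=v(t-x/M)$ if $x\le Mt$; $y^1(x,t)=t\,y_0''(x-Mt)$ if $x>Mt$, $=\frac{x}{M^3}v''(t-x/M)$ if $x\le Mt$; $\partial_x y^0(1,t)=y_0'(1-Mt)$ if $Mt<1$, $=-v'(t-1/M)/M$ if $Mt>1$. Inner terms ($w\in\mathbb R$, $t>0$; subscripts $w$ denote $\partial_w$): $W^0(w,t)=c^++\frac{c^--c^+}{2}\mathrm{erfc}(\frac{w}{2\sqrt t})$; $U^0_\varepsilon(w,t)=\frac{c^--c^+}{2}e^{\frac{Mw}{\sqrt\varepsilon}+\frac{M^2t}{\varepsilon}}\mathrm{erfc}(\frac{w}{2\sqrt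 t}+\frac{M\sqrt t}{\sqrt\varepsilon})$; $W^0_\varepsilon=W^0+U^0_\varepsilon$; $W^{1/2}(w,t)=w\big(\frac{d^+-d^-}{2}\mathrm{erf}(\frac{w}{2\sqrt t})+\frac{d^++d^-}{2}\big)+(d^+-d^-)\sqrt{t/\pi}\,e^{-w^2/(4t)}$; $W^1(w,t)=(\frac{w^2}{2}+t)\big(\frac{e^+-e^-}{2}\mathrm{erf}(\frac{w}{2\sqrt t})+\frac{e^++e^-}{2}\big)+\frac{e^+-e^-}{2}w\sqrt{t/\pi}\,e^{-w^2/(4t)}$; $W^{3/2}(w,t)=(\frac{w^3}{2}+3tw)\big((h^+-h^-)\mathrm{erf}(\frac{w}{2\sqrt t})+h^++h^-\big)+(h^+-h^-)(4t+w^2)\sqrt{t/\pi}\,e^{-w^2/(4t)}-f^-\sqrt{t/\pi}\,e^{-w^2/(4t)}+\frac{f^-}{2}w\,\mathrm{erfc}(\frac{w}{2\sqrt t})$. Composite terms (with $w=\frac{x-Mt}{\sqrt\varepsilon}$): $p^0_\varepsilon=y^0(x,t)+W^0_\varepsilon(w,t)-c^\sigma$; $p^{1/2}=W^{1/2}(w,t)-d^\sigma w$; $p^1=y^1(x,t)+W^1(w,t)-e^\sigma(\frac{w^2}{2}+t)$; $p^{3/2}=W^{3/2}(w,t)-h^\sigma(w^3+6tw)-f^\sigma w$. Boundary-layer coefficients (all inner functions evaluated at $(M\tau,t)$): $a_0=y^0(1,t)+W^0_\varepsilon-c^s$; $a_{1/2}=W^{1/2}-M\tau d^s$; $b_{1/2}=W^0_{\varepsilon,w}$;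 $A=y^1(1,t)+W^1-e^s(\frac{(M\tau)^2}{2}+t)$; $B=-\partial_xy^0(1,t)-W^{1/2}_w+d^s$; $C^\varepsilon=W^0_{\varepsilon,ww}$; $\widetilde A=W^{3/2}-h^s((M\tau)^3+6tM\tau)-f^sM\tau$; $\widetilde B=-W^1_w+M\tau e^s$; $\widetilde C=W^{1/2}_{ww}$; $\widetilde D^\varepsilon=-W^0_{\varepsilon,www}$. Approximation: $\widetilde P^\varepsilon(x,t)=p^0_\varepsilon+\sqrt\varepsilon p^{1/2}+\varepsilon p^1+\varepsilon^{3/2}p^{3/2}+e^{-Mz}\big[-a_0-\sqrt\varepsilon(a_{1/2}+b_{1/2}z)+\varepsilon(-A+Bz-C^\varepsilon\frac{z^2}{2})+\varepsilon^{3/2}(-\widetilde A+\widetilde Bz-\widetilde C\frac{z^2}{2}+\widetilde D^\varepsilon\frac{z^3}{6})\big]$, for $(x,t)\in Q_T$. *)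

theory Defs
  imports "HOL-Analysis.Analysis"
begin

definition erf :: "real \<Rightarrow> real" where
  "erf s = 2 / sqrt pi * (LBINT r=ereal 0..ereal s. exp (- (r^2)))"

definition erfc :: "real \<Rightarrow> real" where
  "erfc s = 1 - erf s"

definition C4_on :: "real set \<Rightarrow> (real \<Rightarrow> real) \<Rightarrow> (real \<Rightarrow> real) \<Rightarrow> (real \<Rightarrow> real)
    \<Rightarrow> (real \<Rightarrow> real) \<Rightarrow> (real \<Rightarrow> real) \<Rightarrow> bool" where
  "C4_on S f f1 f2 f3 f4 \<longleftrightarrow>
     (\<forall>x\<in>S. (f has_real_derivative f1 x) (at x within S) \<and>
            (f1 has_real_derivative f2 x) (at x within S) \<and>
            (f2 has_real_derivative f3 x) (at x within S) \<and>
            (f3 has_real_derivative f4 x) (at x within S)) \<and>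
     continuous_on S f4"

definition W0 :: "real \<Rightarrow> real \<Rightarrow> real \<Rightarrow> real \<Rightarrow> real" where
  "W0 cp cm w t = cp + (cm - cp) / 2 * erfc (w / (2 * sqrt t))"

definition U0 :: "real \<Rightarrow> real \<Rightarrow> real \<Rightarrow> real \<Rightarrow> real \<Rightarrow> real \<Rightarrow> real" where
  "U0 M eps cp cm w t = (cm - cp) / 2 * exp (M * w / sqrt eps + M^2 * t / eps)
      * erfc (w / (2 * sqrt t) + M * sqrt t / sqrt eps)"

definition W0e :: "real \<Rightarrow> real \<Rightarrow> real \<Rightarrow> real \<Rightarrow> real \<Rightarrow> real \<Rightarrow> real" where
  "W0e M eps cp cm w t = W0 cp cm w t + U0 M eps cp cm w t"

definition W12 :: "real \<Rightarrow> real \<Rightarrow> real \<Rightarrow> real \<Rightarrow> real" where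
  "W12 dp dm w t = w * ((dp - dm) / 2 * erf (w / (2 * sqrt t)) + (dp + dm) / 2)
      + (dp - dm) * sqrt (t / pi) * exp (- (w^2) / (4 * t))"

definition W1 :: "real \<Rightarrow> real \<Rightarrow> real \<Rightarrow> real \<Rightarrow> real" where
  "W1 ep em w t = (w^2 / 2 + t) * ((ep - em) / 2 * erf (w / (2 * sqrt t)) + (ep + em) / 2)
      + (ep - em) / 2 * w * sqrt (t / pi) * exp (- (w^2) / (4 * t))"

definition W32 :: "real \<Rightarrow> real \<Rightarrow> real \<Rightarrow> real \<Rightarrow> real \<Rightarrow> real" where
  "W32 hp hm fm w t = (w^3 / 2 + 3 * t * w) * ((hp - hm) * erf (w / (2 * sqrt t)) + hp + hm)
      + (hp - hm) * (4 * t + w^2) * sqrt (t / pi) * exp (- (w^2) / (4 * t))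
      - fm * sqrt (t / pi) * exp (- (w^2) / (4 * t))
      + fm / 2 * w * erfc (w / (2 * sqrt t))"

definition Ptilde :: "real \<Rightarrow> (real \<Rightarrow> real) \<Rightarrow> (real \<Rightarrow> real) \<Rightarrow> (real \<Rightarrow> real) \<Rightarrow> (real \<Rightarrow> real)
    \<Rightarrow> (real \<Rightarrow> real) \<Rightarrow> (real \<Rightarrow> real) \<Rightarrow> (real \<Rightarrow> real) \<Rightarrow> (real \<Rightarrow> real)
    \<Rightarrow> real \<Rightarrow> real \<Rightarrow> real \<Rightarrow> real" where
  "Ptilde M y0 y0' y0'' y0''' v v' v'' v''' eps x t =
    (let cp = y0 0; cm = v 0;
         dp = y0' 0; dm = - v' 0 / M;
         ep = y0'' 0; em = v'' 0 / M^2;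
         fp = (0::real); fm = v'' 0 / M^3;
         hp = y0''' 0 / 6; hm = - v''' 0 / (6 * M^3);
         \<comment> \<open>outer terms\<close>
         Y0 = (\<lambda>x t. if x > M * t then y0 (x - M * t) else v (t - x / M));
         Y1 = (\<lambda>x t. if x > M * t then t * y0'' (x - M * t) else x / M^3 * v'' (t - x / M));
         dxY0_1 = (if M * t < 1 then y0' (1 - M * t) else - v' (t - 1 / M) / M);
         \<comment> \<open>sign sigma (for (x,t)) and s (for t)\<close>
         c\<sigma> = (if x > M * t then cp else cm);
         d\<sigma> = (if x > M * t then dp else dm);
         e\<sigma> = (if x > M * t then ep else em);
         f\<sigma> = (if x > M * t then fp else fm);
         h\<sigma> = (if x > M * t then hp else hm);
         cs = (if M * t \<le> 1 then cp else cm);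
         ds = (if M * t \<le> 1 then dp else dm);
         es = (if M * t \<le> 1 then ep else em);
         fs = (if M * t \<le> 1 then fp else fm);
         hs = (if M * t \<le> 1 then hp else hm);
         \<comment> \<open>scaled variables\<close>
         w = (x - M * t) / sqrt eps;
         z = (1 - x) / eps;
         \<tau> = (1 / M - t) / sqrt eps;
         Mt = M * \<tau>;
         \<comment> \<open>composite terms\<close>
         p0 = Y0 x t + W0e M eps cp cm w t - c\<sigma>;
         p12 = W12 dp dm w t - d\<sigma> * w;
         p1 = Y1 x t + W1 ep em w t - e\<sigma> * (w^2 / 2 + t);
         p32 = W32 hp hm fm w t - h\<sigma> * (w^3 + 6 * t * w) - f\<sigma> * w;
         \<comment> \<open>boundary-layer coefficients, inner functions at (M tau, t)\<close>
         a0 = Y0 1 t + W0e M eps cp cm Mt t - cs;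
         a12 = W12 dp dm Mt t - Mt * ds;
         b12 = deriv (\<lambda>w'. W0e M eps cp cm w' t) Mt;
         A = Y1 1 t + W1 ep em Mt t - es * (Mt^2 / 2 + t);
         B = - dxY0_1 - deriv (\<lambda>w'. W12 dp dm w' t) Mt + ds;
         C = (deriv ^^ 2) (\<lambda>w'. W0e M eps cp cm w' t) Mt;
         At = W32 hp hm fm Mt t - hs * (Mt^3 + 6 * t * Mt) - fs * Mt;
         Bt = - deriv (\<lambda>w'. W1 ep em w' t) Mt + Mt * es;
         Ct = (deriv ^^ 2) (\<lambda>w'. W12 dp dm w' t) Mt;
         Dt = - (deriv ^^ 3) (\<lambda>w'. W0e M eps cp cm w' t) Mt
     in p0 + sqrt eps * p12 + eps * p1 + eps powr (3/2) * p32
        + exp (- M * z) *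
          (- a0 - sqrt eps * (a12 + b12 * z) + eps * (- A + B * z - C * z^2 / 2)
           + eps powr (3/2) * (- At + Bt * z - Ct * z^2 / 2 + Dt * z^3 / 6)))"

text \<open>\<open>u x t\<close>; u(0,t) = g0 t, u(1,t) = g1 t for t in (0,T], u(x,0) = u0 x for x in (0,1).
  u is C^{2,1} in the open Q_T and continuous on the closure of Q_T except at the two
  corners (0,0), (1,0), where the data may be incompatible.\<close>

definition adv_diff_sol :: "real \<Rightarrow> real \<Rightarrow> real \<Rightarrow> (real \<Rightarrow> real) \<Rightarrow> (real \<Rightarrow> real)
    \<Rightarrow> (real \<Rightarrow> real) \<Rightarrow> (real \<Rightarrow> real \<Rightarrow> real) \<Rightarrow> bool" where
  "adv_diff_sol eps M T g0 g1 u0 u \<longleftrightarrow>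
     continuous_on (({0..1} \<times> {0..T}) - {(0,0), (1,0)}) (\<lambda>(x,t). u x t) \<and>
     (\<exists>ut ux uxx.
        continuous_on ({0<..<1} \<times> {0<..<T}) (\<lambda>(x,t). ut x t) \<and>
        continuous_on ({0<..<1} \<times> {0<..<T}) (\<lambda>(x,t). ux x t) \<and>
        continuous_on ({0<..<1} \<times> {0<..<T}) (\<lambda>(x,t). uxx x t) \<and>
        (\<forall>x t. 0 < x \<and> x < 1 \<and> 0 < t \<and> t < T \<longrightarrow>
           ((\<lambda>s. u x s) has_real_derivative ut x t) (at t) \<and>
           ((\<lambda>\<xi>. u \<xi> t) has_real_derivative ux x t) (at x) \<and>
           ((\<lambda>\<xi>. ux \<xi> t) has_real_derivative uxx x t) (at x) \<and>
           ut x t - eps * uxx x t + M * ux x t = 0)) \<and>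
     (\<forall>t\<in>{0<..T}. u 0 t = g0 t \<and> u 1 t = g1 t) \<and>
     (\<forall>x\<in>{0<..<1}. u x 0 = u0 x)"

end

(*
  On the inflow boundary x = 0 the solution y equals v and theta vanishes, so that
  z(0,t) = Ptilde(0,t) - v(t): the PDEs enter only through their boundary values.

  At x = 0 the outer terms of Ptilde reproduce v and W0e equals c^- exactly.  With
  p = sqrt(t/eps), each remaining inner term is eps times exp(-M^2 p^2/4) times a polynomial
  in p and the bounded function erfcx(M p/2) = exp((M p/2)^2) erfc(M p/2); the Gaussian
  beats the polynomial, giving the bound K eps/(1 + p^2)^2 = K eps^3/(eps + t)^2.

  The boundary-layer terms carry the factor exp(-M/eps).  It cancels the exponential growth
  of U0 at w = M tau exactly, and what is left is polynomial in 1/sqrt eps times exp(-M/eps),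
  or polynomial in the erfc argument b >= sqrt(M/eps) times exp(-b^2); both are O(eps^3).
  Finally, the integral of eps^3/(eps + t)^2 over t > 0 is eps^2.
*)

theory Submission
  imports Defs "HOL-Probability.Distributions" "HOL-Real_Asymp.Real_Asymp"
begin

section \<open>The error function\<close>

lemma DERIV_erf: "(erf has_real_derivative 2 / sqrt pi * exp (- (x^2))) (at x)"
proof -
  define a b where "a = - \<bar>x\<bar> - 1" and "b = \<bar>x\<bar> + 1"
  have "continuous_on {a..b} (\<lambda>r::real. exp (- (r^2)))"
    by (intro continuous_intros)
  then have "((\<lambda>u. LBINT r=ereal 0..ereal u. exp (- (r^2))) has_vector_derivative exp (- (x^2)))
      (at x within {a..b})"
    by (rule interval_integral_FTC2[rotated 2]) (auto simp: a_def b_def)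
  moreover have "at x within {a..b} = at x"
    by (rule at_within_Icc_at) (auto simp: a_def b_def)
  ultimately have "((\<lambda>u. LBINT r=ereal 0..ereal u. exp (- (r^2))) has_real_derivative exp (- (x^2))) (at x)"
    by (simp add: has_real_derivative_iff_has_vector_derivative)
  then show ?thesis
    unfolding erf_def[abs_def] by (rule DERIV_cmult)
qed

lemma DERIV_erfc: "(erfc has_real_derivative - (2 / sqrt pi * exp (- (x^2)))) (at x)"
  unfolding erfc_def[abs_def] using DERIV_diff[OF DERIV_const DERIV_erf] by simp

declare DERIV_erf[THEN DERIV_chain2, derivative_intros]
  and DERIV_erfc[THEN DERIV_chain2, derivative_intros]

lemma erf_0 [simp]: "erf 0 = 0"
  by (simp add: erf_def)

lemma erf_minus: "erf (- x) = - erf x"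
proof -
  have "((\<lambda>x. erf x + erf (- x)) has_real_derivative
      2 / sqrt pi * exp (- (y^2)) + 2 / sqrt pi * exp (- ((- y)^2)) * - 1) (at y)" for y
    by (intro derivative_intros DERIV_erf)
  then have "((\<lambda>x. erf x + erf (- x)) has_real_derivative 0) (at y)" for y
    by simp
  then show ?thesis
    using DERIV_isconst_all[of "\<lambda>x. erf x + erf (- x)" x 0] by simp
qed

lemma erfc_minus: "erfc (- x) = 2 - erfc x"
  by (simp add: erfc_def erf_minus)

lemma erf_mono: "x \<le> y \<Longrightarrow> erf x \<le> erf y"
  by (rule DERIV_nonneg_imp_nondecreasing[of x y erf])
    (auto intro!: exI[of _ "2 / sqrt pi * exp (- (_^2))"] DERIV_erf)

lemma erf_nonneg: "0 \<le> x \<Longrightarrow> 0 \<le> erf x"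
  using erf_mono[of 0 x] by simp

lemma erf_tendsto_at_top: "(erf \<longlongrightarrow> 1) at_top"
proof -
  have "has_bochner_integral lborel (\<lambda>x. indicator {0..} x *\<^sub>R exp (- x\<^sup>2)) (sqrt pi / 2)"
    by (rule gaussian_moment_0)
  then have integrable: "set_integrable lborel {0..} (\<lambda>x::real. exp (- x\<^sup>2))"
    and integral: "set_lebesgue_integral lborel {0..} (\<lambda>x::real. exp (- x\<^sup>2)) = sqrt pi / 2"
    unfolding set_integrable_def set_lebesgue_integral_def by (auto simp: has_bochner_integral_iff)
  then have "((\<lambda>b. set_lebesgue_integral lborel {0..b} (\<lambda>x::real. exp (- x\<^sup>2))) \<longlongrightarrow> sqrt pi / 2) at_top"
    using tendsto_set_lebesgue_integral_at_top[OF _ integrable] integral by simp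
  then have "((\<lambda>b. 2 / sqrt pi * set_lebesgue_integral lborel {0..b} (\<lambda>x::real. exp (- x\<^sup>2)))
      \<longlongrightarrow> 2 / sqrt pi * (sqrt pi / 2)) at_top"
    by (intro tendsto_intros)
  moreover have "\<forall>\<^sub>F b in at_top.
      2 / sqrt pi * set_lebesgue_integral lborel {0..b} (\<lambda>x::real. exp (- x\<^sup>2)) = erf b"
    using eventually_ge_at_top[of "0::real"]
    by eventually_elim (simp add: erf_def interval_integral_Icc)
  ultimately show ?thesis
    by (simp add: Lim_transform_eventually)
qed

lemma erf_le_one: "erf x \<le> 1"
  by (rule tendsto_lowerbound[OF erf_tendsto_at_top])
    (auto simp: eventually_at_top_linorder intro!: exI[of _ x] erf_mono)

lemma abs_erf_le_one: "\<bar>erf x\<bar> \<le> 1"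
  using erf_le_one[of x] erf_le_one[of "- x"] by (simp add: erf_minus)

lemma erfc_nonneg: "0 \<le> erfc x"
  using erf_le_one[of x] by (simp add: erfc_def)

lemma erfc_le_two: "erfc x \<le> 2"
  using abs_erf_le_one[of x] by (simp add: erfc_def)

lemma sqrt_mult_sqrt_mult: "0 \<le> a \<Longrightarrow> sqrt a * (sqrt a * z) = a * z"
  by (simp flip: mult.assoc)

lemma erfc_tail_bound:
  assumes "0 < a"
  shows "erfc a \<le> exp (- (a^2)) / (a * sqrt pi)"
proof -
  define f where "f x = exp (- (x^2)) / (x * sqrt pi) - erfc x" for x
  have f_deriv: "(f has_real_derivative - exp (- (x^2)) / (x^2 * sqrt pi)) (at x)" if "0 < x" for x
    unfolding f_def[abs_def] erfc_def using that
    by (auto intro!: derivative_eq_intros simp: power2_eq_square field_simps sqrt_mult_sqrt_mult)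
  have f_antimono: "f y \<le> f a" if "a \<le> y" for y
  proof (rule DERIV_nonpos_imp_nonincreasing[OF that])
    fix x assume "a \<le> x"
    with assms have "0 < x" by simp
    then show "\<exists>y. (f has_real_derivative y) (at x) \<and> y \<le> 0"
      using f_deriv by (intro exI conjI) auto
  qed
  have "(erfc \<longlongrightarrow> 0) at_top"
    unfolding erfc_def[abs_def] using tendsto_diff[OF tendsto_const erf_tendsto_at_top, of 1] by simp
  moreover have "((\<lambda>x. exp (- (x^2)) / (x * sqrt pi)) \<longlongrightarrow> 0) at_top"
    by real_asymp
  ultimately have "(f \<longlongrightarrow> 0) at_top"
    unfolding f_def[abs_def] using tendsto_diff by fastforce
  then have "0 \<le> f a"
    by (rule tendsto_upperbound) (auto simp: eventually_at_top_linorder intro!: f_antimono)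
  then show ?thesis by (simp add: f_def)
qed

definition erfcx :: "real \<Rightarrow> real" where
  "erfcx y = exp (y^2) * erfc y"

lemma erfc_eq_erfcx: "erfc y = exp (- (y^2)) * erfcx y"
  by (simp add: erfcx_def exp_minus field_simps)

lemma erfcx_nonneg: "0 \<le> erfcx y"
  by (simp add: erfcx_def erfc_nonneg)

lemma erfcx_le_3:
  assumes "0 \<le> y"
  shows "erfcx y \<le> 3"
proof (cases "y \<le> 1")
  case True
  have "erfcx y \<le> exp 1 * 1"
    unfolding erfcx_def using True assms erf_nonneg[OF assms]
    by (intro mult_mono) (auto simp: erfc_def power_le_one erf_le_one)
  also have "\<dots> \<le> 3"
    using exp_le by simp
  finally show ?thesis .
next
  case False
  then have "1 \<le> y * sqrt pi"
    using pi_gt3 by (intro mult_ge1_I) (auto simp: real_sqrt_ge_1_iff)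
  have "erfcx y \<le> exp (y^2) * (exp (- (y^2)) / (y * sqrt pi))"
    unfolding erfcx_def using False by (intro mult_left_mono erfc_tail_bound) auto
  also have "\<dots> = 1 / (y * sqrt pi)"
    by (simp add: exp_minus field_simps)
  also have "\<dots> \<le> 1"
    using \<open>1 \<le> y * sqrt pi\<close> by simp
  finally show ?thesis by simp
qed

section \<open>Functions of polynomial growth\<close>

definition poly_bounded :: "('a \<Rightarrow> real) \<Rightarrow> 'a set \<Rightarrow> nat \<Rightarrow> ('a \<Rightarrow> real) \<Rightarrow> bool" where
  "poly_bounded B D N f \<longleftrightarrow> (\<forall>x\<in>D. 0 \<le> B x) \<and> (\<exists>A\<ge>0. \<forall>x\<in>D. \<bar>f x\<bar> \<le> A * (1 + B x)^N)"

lemma poly_bounded_boundedI: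
  "\<forall>x\<in>D. 0 \<le> B x \<Longrightarrow> (\<And>x. x \<in> D \<Longrightarrow> \<bar>f x\<bar> \<le> C) \<Longrightarrow> poly_bounded B D 0 f"
  unfolding poly_bounded_def by (auto intro!: exI[of _ "\<bar>C\<bar>"]) (meson abs_ge_self order_trans)

lemma poly_bounded_const: "\<forall>x\<in>D. 0 \<le> B x \<Longrightarrow> poly_bounded B D 0 (\<lambda>x. c)"
  by (rule poly_bounded_boundedI) auto

lemma poly_bounded_linearI:
  assumes "\<forall>x\<in>D. 0 \<le> B x" and "\<And>x. x \<in> D \<Longrightarrow> \<bar>f x\<bar> \<le> C * (1 + B x)"
  shows "poly_bounded B D 1 f"
proof -
  have "\<bar>f x\<bar> \<le> \<bar>C\<bar> * (1 + B x)" if "x \<in> D" for x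
  proof -
    have "C * (1 + B x) \<le> \<bar>C\<bar> * (1 + B x)"
      using assms(1) that by (intro mult_right_mono) auto
    with assms(2)[OF that] show ?thesis
      by linarith
  qed
  with assms(1) show ?thesis
    unfolding poly_bounded_def by (auto intro!: exI[of _ "\<bar>C\<bar>"])
qed

lemma poly_bounded_size: "\<forall>x\<in>D. 0 \<le> B x \<Longrightarrow> poly_bounded B D 1 B"
  by (rule poly_bounded_linearI[where C = 1]) auto

lemma poly_bounded_mono:
  assumes f: "poly_bounded B D i f" and "i \<le> j"
  shows "poly_bounded B D j f"
proof -
  obtain A where B: "\<forall>x\<in>D. 0 \<le> B x" and "A \<ge> 0" and A: "\<forall>x\<in>D. \<bar>f x\<bar> \<le> A * (1 + B x)^i"
    using f unfolding poly_bounded_def by auto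
  have "\<bar>f x\<bar> \<le> A * (1 + B x)^j" if "x \<in> D" for x
  proof -
    have "(1 + B x)^i \<le> (1 + B x)^j"
      using B \<open>i \<le> j\<close> that by (intro power_increasing) auto
    then show ?thesis
      using A \<open>A \<ge> 0\<close> that by (meson mult_left_mono order_trans)
  qed
  with B \<open>A \<ge> 0\<close> show ?thesis
    unfolding poly_bounded_def by auto
qed

lemma poly_bounded_add:
  assumes "poly_bounded B D i f" and "poly_bounded B D j g"
  shows "poly_bounded B D (max i j) (\<lambda>x. f x + g x)"
proof -
  obtain A1 A2 where "\<forall>x\<in>D. 0 \<le> B x" "A1 \<ge> 0" "A2 \<ge> 0"
    "\<forall>x\<in>D. \<bar>f x\<bar> \<le> A1 * (1 + B x)^max i j" "\<forall>x\<in>D. \<bar>g x\<bar> \<le> A2 * (1 + B x)^max i j"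
    using poly_bounded_mono[OF assms(1), of "max i j"] poly_bounded_mono[OF assms(2), of "max i j"]
    unfolding poly_bounded_def by auto
  then show ?thesis
    unfolding poly_bounded_def
    by (intro conjI exI[of _ "A1 + A2"])
      (auto simp: algebra_simps intro!: abs_triangle_ineq[THEN order_trans] add_mono)
qed

lemma poly_bounded_uminus: "poly_bounded B D i f \<Longrightarrow> poly_bounded B D i (\<lambda>x. - f x)"
  unfolding poly_bounded_def by simp

lemma poly_bounded_diff:
  "poly_bounded B D i f \<Longrightarrow> poly_bounded B D j g \<Longrightarrow> poly_bounded B D (max i j) (\<lambda>x. f x - g x)"
  using poly_bounded_add[of B D i f j "\<lambda>x. - g x"] poly_bounded_uminus[of B D j g] by simp

lemma poly_bounded_mult:
  assumes "poly_bounded B D i f" and "poly_bounded B D j g"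
  shows "poly_bounded B D (i + j) (\<lambda>x. f x * g x)"
proof -
  obtain A1 A2 where B: "\<forall>x\<in>D. 0 \<le> B x" and "A1 \<ge> 0" "A2 \<ge> 0"
    and A: "\<forall>x\<in>D. \<bar>f x\<bar> \<le> A1 * (1 + B x)^i" "\<forall>x\<in>D. \<bar>g x\<bar> \<le> A2 * (1 + B x)^j"
    using assms unfolding poly_bounded_def by auto
  have "\<bar>f x * g x\<bar> \<le> A1 * A2 * (1 + B x)^(i + j)" if "x \<in> D" for x
  proof -
    have "\<bar>f x * g x\<bar> \<le> (A1 * (1 + B x)^i) * (A2 * (1 + B x)^j)"
      unfolding abs_mult using A B \<open>A1 \<ge> 0\<close> that by (intro mult_mono) auto
    then show ?thesis
      by (simp add: power_add mult_ac)
  qed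
  with B \<open>A1 \<ge> 0\<close> \<open>A2 \<ge> 0\<close> show ?thesis
    unfolding poly_bounded_def by (auto intro!: exI[of _ "A1 * A2"])
qed

lemma poly_bounded_divide_const: "poly_bounded B D i f \<Longrightarrow> poly_bounded B D i (\<lambda>x. f x / c)"
  using poly_bounded_mult[of B D i f 0 "\<lambda>x. 1 / c"] poly_bounded_const[of D B "1 / c"]
  by (simp add: poly_bounded_def)

lemma poly_bounded_power: "poly_bounded B D i f \<Longrightarrow> poly_bounded B D (i * n) (\<lambda>x. f x ^ n)"
proof (induction n)
  case 0
  then show ?case
    using poly_bounded_const[of D B 1] by (simp add: poly_bounded_def)
next
  case (Suc n)
  then have "poly_bounded B D (i + i * n) (\<lambda>x. f x * f x ^ n)"
    by (intro poly_bounded_mult)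
  then show ?case
    by (simp add: algebra_simps)
qed

lemmas poly_bounded_intros =
  poly_bounded_add poly_bounded_diff poly_bounded_uminus poly_bounded_mult
  poly_bounded_divide_const poly_bounded_power poly_bounded_const

lemma polynomial_times_gaussian_bounded:
  fixes c :: real
  assumes "0 < c"
  shows "\<exists>K. \<forall>y\<ge>0. (1 + y)^n * exp (- (c * y^2)) \<le> K"
proof -
  define f where "f y = (1 + y)^n * exp (- (c * y^2))" for y :: real
  have "(f \<longlongrightarrow> 0) at_top"
    unfolding f_def using assms by real_asymp
  then have "\<forall>\<^sub>F y in at_top. f y < 1"
    by (rule order_tendstoD(2)) simp
  then obtain Y where Y: "\<And>y. Y \<le> y \<Longrightarrow> f y < 1"
    unfolding eventually_at_top_linorder by blast
  have "bounded (f ` {0..Y})"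
    unfolding f_def by (intro compact_imp_bounded compact_continuous_image continuous_intros) auto
  then obtain C where C: "\<forall>z\<in>f ` {0..Y}. norm z \<le> C"
    unfolding bounded_iff by blast
  have "f y \<le> max 1 C" if "0 \<le> y" for y
  proof (cases "y \<le> Y")
    case True
    with C that have "\<bar>f y\<bar> \<le> C" by simp
    then show ?thesis by linarith
  next
    case False
    with Y[of y] show ?thesis by linarith
  qed
  then show ?thesis
    unfolding f_def by blast
qed

lemma poly_bounded_gaussian_decay:
  assumes "poly_bounded B D N g" and "0 < c"
  shows "\<exists>K\<ge>0. \<forall>x\<in>D. \<bar>exp (- (c * B x ^ 2)) * g x\<bar> \<le> K / (1 + B x)^n"
proof -
  obtain A where B: "\<forall>x\<in>D. 0 \<le> B x" and "A \<ge> 0" and A: "\<forall>x\<in>D. \<bar>g x\<bar> \<le> A * (1 + B x)^N"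
    using assms(1) unfolding poly_bounded_def by auto
  obtain K where K: "\<And>y. 0 \<le> y \<Longrightarrow> (1 + y)^(N + n) * exp (- (c * y^2)) \<le> K"
    using polynomial_times_gaussian_bounded[OF assms(2)] by blast
  have "0 \<le> K"
    using K[of 0] by simp
  have "\<bar>exp (- (c * B x ^ 2)) * g x\<bar> \<le> A * K / (1 + B x)^n" if "x \<in> D" for x
  proof -
    have "0 < 1 + B x"
      using B that by (simp add: add_pos_nonneg)
    then have pos: "0 < (1 + B x)^n"
      by simp
    have "\<bar>exp (- (c * B x ^ 2)) * g x\<bar> \<le> exp (- (c * B x ^ 2)) * (A * (1 + B x)^N)"
      unfolding abs_mult abs_exp_cancel using A that by (intro mult_left_mono) auto
    also have "\<dots> = A * ((1 + B x)^(N + n) * exp (- (c * B x ^ 2))) / (1 + B x)^n"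
      using \<open>0 < 1 + B x\<close> by (simp add: power_add field_simps)
    also have "\<dots> \<le> A * K / (1 + B x)^n"
      using K B \<open>A \<ge> 0\<close> pos that by (intro divide_right_mono mult_left_mono) auto
    finally show ?thesis .
  qed
  with \<open>A \<ge> 0\<close> \<open>0 \<le> K\<close> show ?thesis
    by (intro exI[of _ "A * K"]) auto
qed

lemma poly_bounded_erfcx:
  "\<forall>x\<in>D. 0 \<le> B x \<Longrightarrow> \<forall>x\<in>D. 0 \<le> f x \<Longrightarrow> poly_bounded B D 0 (\<lambda>x. erfcx (f x))"
  by (rule poly_bounded_boundedI[where C = 3]) (auto simp: erfcx_nonneg erfcx_le_3)

lemma poly_bounded_erf: "\<forall>x\<in>D. 0 \<le> B x \<Longrightarrow> poly_bounded B D 0 (\<lambda>x. erf (f x))"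
  by (rule poly_bounded_boundedI[where C = 1]) (auto simp: abs_erf_le_one)

lemma poly_bounded_erfc: "\<forall>x\<in>D. 0 \<le> B x \<Longrightarrow> poly_bounded B D 0 (\<lambda>x. erfc (f x))"
  by (rule poly_bounded_boundedI[where C = 2]) (auto simp: erfc_nonneg erfc_le_two)

lemma poly_bounded_exp_neg_square_div:
  "\<forall>x\<in>D. 0 \<le> B x \<Longrightarrow> \<forall>x\<in>D. 0 < g x \<Longrightarrow> poly_bounded B D 0 (\<lambda>x. exp (- (f x ^ 2) / g x))"
  by (rule poly_bounded_boundedI[where C = 1]) auto

section \<open>Derivatives of the inner functions\<close>

text \<open>For fixed \<open>t\<close>, \<open>W0e(\<cdot>, t) = c + \<Delta> (G0 + H G)\<close> with \<open>G0, G\<close> shifted and rescaled copies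
  of \<open>erfc\<close> and \<open>H\<close> an exponential.  Recording only the first-order equations satisfied by
  these building blocks, its first three derivatives follow from the product rule alone.\<close>

locale W0e_building_blocks =
  fixes G0 E0 H G E :: "real \<Rightarrow> real" and \<kappa> i \<alpha> \<gamma> :: real
  assumes DERIV_G0: "\<And>w. (G0 has_real_derivative - (\<kappa> * i * E0 w)) (at w)"
    and DERIV_E0: "\<And>w. (E0 has_real_derivative - 2 * w * i^2 * E0 w) (at w)"
    and DERIV_H: "\<And>w. (H has_real_derivative \<alpha> * H w) (at w)"
    and DERIV_G: "\<And>w. (G has_real_derivative - (\<kappa> * i * E w)) (at w)"
    and DERIV_E: "\<And>w. (E has_real_derivative - 2 * (w * i + \<gamma>) * i * E w) (at w)"
begin

definition "form c \<Delta> w = c + \<Delta> * G0 w + \<Delta> * (H w * G w)"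
definition "form_d1 \<Delta> w = \<Delta> * (- (\<kappa> * i * E0 w)) + \<Delta> * (H w * (\<alpha> * G w - \<kappa> * i * E w))"
definition "form_d2 \<Delta> w = \<Delta> * (2 * \<kappa> * w * i^3 * E0 w) + \<Delta> * (H w * (\<alpha>^2 * G w
     - 2 * \<alpha> * \<kappa> * i * E w + 2 * \<kappa> * (w * i + \<gamma>) * i^2 * E w))"
definition "form_d3 \<Delta> w = \<Delta> * (2 * \<kappa> * i^3 * (1 - 2 * w^2 * i^2) * E0 w) + \<Delta> * (H w * (\<alpha>^3 * G w
     - 3 * \<alpha>^2 * \<kappa> * i * E w + 6 * \<alpha> * \<kappa> * (w * i + \<gamma>) * i^2 * E w
     + 2 * \<kappa> * (1 - 2 * (w * i + \<gamma>)^2) * i^3 * E w))"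

lemmas building_block_rules =
  DERIV_G0 DERIV_E0 DERIV_H DERIV_G DERIV_E
  DERIV_add DERIV_diff DERIV_minus DERIV_const DERIV_cmult DERIV_mult DERIV_ident

lemma DERIV_form: "(form c \<Delta> has_real_derivative form_d1 \<Delta> w) (at w)"
  unfolding form_def[abs_def] form_d1_def
  by (rule DERIV_cong, (rule building_block_rules)+) (simp add: algebra_simps)

lemma DERIV_form_d1: "(form_d1 \<Delta> has_real_derivative form_d2 \<Delta> w) (at w)"
  unfolding form_d1_def[abs_def] form_d2_def
  by (rule DERIV_cong, (rule building_block_rules)+)
    (simp add: algebra_simps power2_eq_square power3_eq_cube)

lemma DERIV_form_d2: "(form_d2 \<Delta> has_real_derivative form_d3 \<Delta> w) (at w)"
  unfolding form_d2_def[abs_def] form_d3_def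
  by (rule DERIV_cong, (rule building_block_rules)+)
    (simp add: algebra_simps power2_eq_square power3_eq_cube)

lemma deriv_form:
  "deriv (form c \<Delta>) = form_d1 \<Delta>" "deriv (form_d1 \<Delta>) = form_d2 \<Delta>" "deriv (form_d2 \<Delta>) = form_d3 \<Delta>"
  using DERIV_form DERIV_form_d1 DERIV_form_d2 by (auto intro!: ext DERIV_imp_deriv)

end

definition "gauss_w t w = exp (- ((w / (2 * sqrt t))^2))"
definition "exp_layer M e t w = exp (M * w / sqrt e + M^2 * t / e)"
definition "erfc_layer M e t w = erfc (w / (2 * sqrt t) + M * sqrt t / sqrt e)"
definition "gauss_layer M e t w = exp (- ((w / (2 * sqrt t) + M * sqrt t / sqrt e)^2))"

lemma pos_as_square:
  assumes "0 < t"
  obtains q where "0 < q" and "t = q^2" and "sqrt t = q"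
  using assms by (metis real_sqrt_gt_zero real_sqrt_pow2 less_imp_le)

lemma W0e_building_blocks_instance:
  assumes "0 < e" and "0 < t"
  shows "W0e_building_blocks (\<lambda>w. erfc (w / (2 * sqrt t))) (gauss_w t) (exp_layer M e t)
    (erfc_layer M e t) (gauss_layer M e t) (2 / sqrt pi) (1 / (2 * sqrt t)) (M / sqrt e) (M * sqrt t / sqrt e)"
proof -
  obtain q where q: "0 < q" "t = q^2" "sqrt t = q"
    using assms(2) by (rule pos_as_square)
  obtain r where r: "0 < r" "e = r^2" "sqrt e = r"
    using assms(1) by (rule pos_as_square)
  show ?thesis
  proof
    fix w
    show "((\<lambda>w. erfc (w / (2 * sqrt t))) has_real_derivative
        - (2 / sqrt pi * (1 / (2 * sqrt t)) * gauss_w t w)) (at w)"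
      unfolding gauss_w_def using q by (auto intro!: derivative_eq_intros simp: field_simps)
    show "(gauss_w t has_real_derivative - 2 * w * (1 / (2 * sqrt t))^2 * gauss_w t w) (at w)"
      unfolding gauss_w_def[abs_def] using q
      by (auto intro!: derivative_eq_intros simp: field_simps power2_eq_square)
    show "(exp_layer M e t has_real_derivative M / sqrt e * exp_layer M e t w) (at w)"
      unfolding exp_layer_def[abs_def] using r by (auto intro!: derivative_eq_intros simp: field_simps)
    show "(erfc_layer M e t has_real_derivative
        - (2 / sqrt pi * (1 / (2 * sqrt t)) * gauss_layer M e t w)) (at w)"
      unfolding erfc_layer_def[abs_def] gauss_layer_def using q
      by (auto intro!: derivative_eq_intros simp: field_simps)
    show "(gauss_layer M e t has_real_derivative
        - 2 * (w * (1 / (2 * sqrt t)) + M * sqrt t / sqrt e) * (1 / (2 * sqrt t)) * gauss_layer M e t w) (at w)"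
      unfolding gauss_layer_def[abs_def] using q r
      by (auto intro!: derivative_eq_intros simp: field_simps power2_eq_square)
  qed
qed

lemma funpow_deriv_2: "(deriv ^^ 2) f = deriv (deriv f)"
  by (simp add: numeral_2_eq_2)

lemma funpow_deriv_3: "(deriv ^^ 3) f = deriv (deriv (deriv f))"
  by (simp add: numeral_3_eq_3)

lemma W0e_derivs:
  fixes M e t c1 c2 w :: real
  assumes "0 < e" and "0 < t"
  defines "\<kappa> \<equiv> 2 / sqrt pi" and "i \<equiv> 1 / (2 * sqrt t)" and "\<alpha> \<equiv> M / sqrt e"
    and "\<gamma> \<equiv> M * sqrt t / sqrt e" and "\<Delta> \<equiv> (c2 - c1) / 2"
  shows "deriv (\<lambda>w'. W0e M e c1 c2 w' t) w = \<Delta> * (- (\<kappa> * i * gauss_w t w))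
      + \<Delta> * (exp_layer M e t w * (\<alpha> * erfc_layer M e t w - \<kappa> * i * gauss_layer M e t w))"
    and "(deriv ^^ 2) (\<lambda>w'. W0e M e c1 c2 w' t) w = \<Delta> * (2 * \<kappa> * w * i^3 * gauss_w t w)
      + \<Delta> * (exp_layer M e t w * (\<alpha>^2 * erfc_layer M e t w - 2 * \<alpha> * \<kappa> * i * gauss_layer M e t w
        + 2 * \<kappa> * (w * i + \<gamma>) * i^2 * gauss_layer M e t w))"
    and "(deriv ^^ 3) (\<lambda>w'. W0e M e c1 c2 w' t) w
      = \<Delta> * (2 * \<kappa> * i^3 * (1 - 2 * w^2 * i^2) * gauss_w t w)
      + \<Delta> * (exp_layer M e t w * (\<alpha>^3 * erfc_layer M e t w - 3 * \<alpha>^2 * \<kappa> * i * gauss_layer M e t w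
        + 6 * \<alpha> * \<kappa> * (w * i + \<gamma>) * i^2 * gauss_layer M e t w
        + 2 * \<kappa> * (1 - 2 * (w * i + \<gamma>)^2) * i^3 * gauss_layer M e t w))"
proof -
  interpret W0e_building_blocks "\<lambda>w. erfc (w / (2 * sqrt t))" "gauss_w t" "exp_layer M e t"
    "erfc_layer M e t" "gauss_layer M e t" \<kappa> i \<alpha> \<gamma>
    unfolding \<kappa>_def i_def \<alpha>_def \<gamma>_def using assms(1,2) by (rule W0e_building_blocks_instance)
  have W0e_eq: "(\<lambda>w'. W0e M e c1 c2 w' t) = form c1 \<Delta>"
    by (rule ext, simp only: form_def W0e_def W0_def U0_def exp_layer_def erfc_layer_def \<Delta>_def)
  show "deriv (\<lambda>w'. W0e M e c1 c2 w' t) w = \<Delta> * (- (\<kappa> * i * gauss_w t w))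
      + \<Delta> * (exp_layer M e t w * (\<alpha> * erfc_layer M e t w - \<kappa> * i * gauss_layer M e t w))"
    unfolding W0e_eq deriv_form form_d1_def ..
  show "(deriv ^^ 2) (\<lambda>w'. W0e M e c1 c2 w' t) w = \<Delta> * (2 * \<kappa> * w * i^3 * gauss_w t w)
      + \<Delta> * (exp_layer M e t w * (\<alpha>^2 * erfc_layer M e t w - 2 * \<alpha> * \<kappa> * i * gauss_layer M e t w
        + 2 * \<kappa> * (w * i + \<gamma>) * i^2 * gauss_layer M e t w))"
    unfolding W0e_eq funpow_deriv_2 deriv_form form_d2_def ..
  show "(deriv ^^ 3) (\<lambda>w'. W0e M e c1 c2 w' t) w
      = \<Delta> * (2 * \<kappa> * i^3 * (1 - 2 * w^2 * i^2) * gauss_w t w)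
      + \<Delta> * (exp_layer M e t w * (\<alpha>^3 * erfc_layer M e t w - 3 * \<alpha>^2 * \<kappa> * i * gauss_layer M e t w
        + 6 * \<alpha> * \<kappa> * (w * i + \<gamma>) * i^2 * gauss_layer M e t w
        + 2 * \<kappa> * (1 - 2 * (w * i + \<gamma>)^2) * i^3 * gauss_layer M e t w))"
    unfolding W0e_eq funpow_deriv_3 deriv_form form_d3_def ..
qed

lemma sqrt_over_pi: "0 \<le> t \<Longrightarrow> sqrt (t / pi) = sqrt t / sqrt pi"
  by (simp add: real_sqrt_divide)

lemma W12_derivs:
  assumes "0 < t"
  shows "deriv (\<lambda>w'. W12 d1 d2 w' t) w = (d1 - d2) / 2 * erf (w / (2 * sqrt t)) + (d1 + d2) / 2"
    and "(deriv ^^ 2) (\<lambda>w'. W12 d1 d2 w' t) w = (d1 - d2) / 2 * (2 / sqrt pi * gauss_w t w * (1 / (2 * sqrt t)))"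
proof -
  have "((\<lambda>w. W12 d1 d2 w t) has_real_derivative
      (d1 - d2) / 2 * erf (w / (2 * sqrt t)) + (d1 + d2) / 2) (at w)" for w
    unfolding W12_def sqrt_over_pi[OF less_imp_le[OF assms]] using assms
    by (rule_tac DERIV_cong, (auto intro!: derivative_eq_intros)[1])
      (simp add: field_simps power2_eq_square sqrt_mult_sqrt_mult)
  then have deriv_W12: "deriv (\<lambda>w'. W12 d1 d2 w' t) =
      (\<lambda>w. (d1 - d2) / 2 * erf (w / (2 * sqrt t)) + (d1 + d2) / 2)"
    by (auto intro!: ext DERIV_imp_deriv)
  then show "deriv (\<lambda>w'. W12 d1 d2 w' t) w = (d1 - d2) / 2 * erf (w / (2 * sqrt t)) + (d1 + d2) / 2"
    by simp
  have "((\<lambda>w. (d1 - d2) / 2 * erf (w / (2 * sqrt t)) + (d1 + d2) / 2) has_real_derivative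
      (d1 - d2) / 2 * (2 / sqrt pi * gauss_w t w * (1 / (2 * sqrt t)))) (at w)"
    unfolding gauss_w_def using assms by (auto intro!: derivative_eq_intros simp: field_simps)
  then show "(deriv ^^ 2) (\<lambda>w'. W12 d1 d2 w' t) w
      = (d1 - d2) / 2 * (2 / sqrt pi * gauss_w t w * (1 / (2 * sqrt t)))"
    unfolding funpow_deriv_2 deriv_W12 by (rule DERIV_imp_deriv)
qed

lemma W1_deriv:
  assumes "0 < t"
  shows "deriv (\<lambda>w'. W1 e1 e2 w' t) w = w * ((e1 - e2) / 2 * erf (w / (2 * sqrt t)) + (e1 + e2) / 2)
      + (e1 - e2) * sqrt (t / pi) * exp (- (w^2) / (4 * t))"
proof (rule DERIV_imp_deriv)
  show "((\<lambda>w. W1 e1 e2 w t) has_real_derivative w * ((e1 - e2) / 2 * erf (w / (2 * sqrt t)) + (e1 + e2) / 2)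
      + (e1 - e2) * sqrt (t / pi) * exp (- (w^2) / (4 * t))) (at w)"
    unfolding W1_def sqrt_over_pi[OF less_imp_le[OF assms]] using assms
    by (rule_tac DERIV_cong, (auto intro!: derivative_eq_intros)[1])
      (simp add: field_simps power2_eq_square sqrt_mult_sqrt_mult)
qed

section \<open>The inner functions on the inflow boundary\<close>

text \<open>On \<open>x = 0\<close> the inner variable is \<open>w = -M t / \<surd>\<epsilon>\<close>.  Writing \<open>\<epsilon> = r\<^sup>2\<close> and \<open>t = (r p)\<^sup>2\<close>,
  i.e. \<open>p = \<surd>(t/\<epsilon>)\<close>, every inner term minus its outer limit is a power of \<open>r\<close> times
  \<open>exp (-M\<^sup>2 p\<^sup>2 / 4)\<close> times a polynomial in \<open>p\<close> and \<open>erfcx (M p / 2)\<close>, and \<open>W0e\<close> equals \<open>c\<^sup>-\<close> exactly.\<close>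

lemma inflow_arguments:
  assumes "0 < r" and "0 < p"
  shows "sqrt (r^2) = r" and "sqrt ((r * p)^2) = r * p"
    and "sqrt ((r * p)^2 / pi) = r * p / sqrt pi"
    and "(0 - M * (r * p)^2) / r = - (M * r * p^2)"
    and "- (M * r * p^2) / (2 * (r * p)) = - (M * p / 2)"
    and "- (M * p / 2) + M * (r * p) / r = M * p / 2"
    and "- ((- (M * r * p^2))^2) / (4 * (r * p)^2) = - (M^2 / 4 * p^2)"
    and "M * (- (M * r * p^2)) / r + M^2 * (r * p)^2 / r^2 = 0"
  using assms by (simp_all add: real_sqrt_divide real_sqrt_mult) (simp_all add: field_simps power2_eq_square)

lemma erfc_as_erfcx: "erfc (M * p / 2) = exp (- (M^2 / 4 * p^2)) * erfcx (M * p / 2)"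
  by (simp add: erfc_eq_erfcx power_mult_distrib power_divide algebra_simps)

lemma erf_as_erfcx: "erf (M * p / 2) = 1 - exp (- (M^2 / 4 * p^2)) * erfcx (M * p / 2)"
  using erfc_as_erfcx[of M p] unfolding erfc_def by linarith

lemma powr_three_halves:
  assumes "0 < r"
  shows "(r^2) powr (3/2) = (r::real)^3"
proof -
  have "(r^2) powr (3/2) = (r powr 2) powr (3/2)"
    using assms by (simp add: powr_numeral)
  also have "\<dots> = r powr 3"
    by (simp add: powr_powr)
  also have "\<dots> = r^3"
    using assms by (simp add: powr_numeral)
  finally show ?thesis .
qed

lemma W0e_on_inflow_boundary:
  assumes "0 < r" and "0 < p"
  shows "W0e M (r^2) c1 c2 ((0 - M * (r * p)^2) / sqrt (r^2)) ((r * p)^2) = c2"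
  unfolding W0e_def W0_def U0_def
  by (simp only: inflow_arguments[OF assms] erfc_minus) (simp add: field_simps)

lemma W12_on_inflow_boundary:
  assumes "0 < r" and "0 < p"
  shows "sqrt (r^2) * (W12 d1 d2 ((0 - M * (r * p)^2) / sqrt (r^2)) ((r * p)^2)
        - d2 * ((0 - M * (r * p)^2) / sqrt (r^2)))
    = r^2 * (exp (- (M^2 / 4 * p^2)) * ((d1 - d2) * (- (M / 2) * p * (p * erfcx (M * p / 2)) + p / sqrt pi)))"
  unfolding W12_def
  by (simp only: inflow_arguments[OF assms] erf_minus erf_as_erfcx)
    (use assms in \<open>simp add: field_simps power2_eq_square\<close>)

lemma W1_on_inflow_boundary:
  assumes "0 < r" and "0 < p"
  shows "r^2 * (W1 e1 e2 ((0 - M * (r * p)^2) / sqrt (r^2)) ((r * p)^2)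
        - e2 * (((0 - M * (r * p)^2) / sqrt (r^2))^2 / 2 + (r * p)^2))
    = r^2 * (exp (- (M^2 / 4 * p^2)) * (r^2 * ((e1 - e2) / 2)
        * ((M^2 * p^3 / 2 + p) * (p * erfcx (M * p / 2)) - M * p^3 / sqrt pi)))"
  unfolding W1_def
  by (simp only: inflow_arguments[OF assms] erf_minus erf_as_erfcx)
    (use assms in \<open>simp add: field_simps power2_eq_square power3_eq_cube\<close>)

lemma W32_on_inflow_boundary:
  assumes "0 < r" and "0 < p"
  shows "(r^2) powr (3/2) * (W32 h1 h2 f ((0 - M * (r * p)^2) / sqrt (r^2)) ((r * p)^2)
        - h2 * (((0 - M * (r * p)^2) / sqrt (r^2))^3 + 6 * (r * p)^2 * ((0 - M * (r * p)^2) / sqrt (r^2)))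
        - f * ((0 - M * (r * p)^2) / sqrt (r^2)))
    = r^2 * (exp (- (M^2 / 4 * p^2)) * ((r^2)^2 * (h1 - h2)
          * (- M * p * (M^2 * p^4 / 2 + 3 * p^2) * (p * erfcx (M * p / 2)) + (4 * p^3 + M^2 * p^5) / sqrt pi)
        + r^2 * f * (- p / sqrt pi + M * p / 2 * (p * erfcx (M * p / 2)))))"
  unfolding W32_def
  by (simp only: inflow_arguments[OF assms] erf_minus erfc_minus powr_three_halves[OF assms(1)]
      erf_as_erfcx erfc_as_erfcx)
    (simp add: field_simps eval_nat_numeral)

section \<open>The approximation on the inflow boundary\<close>

lemma C4_on_bounded:
  assumes "C4_on {a..b} f f1 f2 f3 f4"
  shows "\<exists>B. \<forall>y\<in>{a..b}. \<bar>f y\<bar> \<le> B \<and> \<bar>f1 y\<bar> \<le> B \<and> \<bar>f2 y\<bar> \<le> B"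
proof -
  have continuous: "continuous_on {a..b} g"
    if "\<forall>y\<in>{a..b}. (g has_real_derivative g' y) (at y within {a..b})" for g g'
    using that by (auto simp: continuous_on_eq_continuous_within intro: DERIV_continuous)
  have bounded: "\<exists>B. \<forall>y\<in>{a..b}. \<bar>g y\<bar> \<le> B" if "continuous_on {a..b} g" for g :: "real \<Rightarrow> real"
    using compact_imp_bounded[OF compact_continuous_image[OF that compact_Icc]]
    unfolding bounded_iff by auto
  have "continuous_on {a..b} f" "continuous_on {a..b} f1" "continuous_on {a..b} f2"
    using assms unfolding C4_on_def by (auto intro!: continuous)
  then obtain B0 B1 B2 where
    "\<forall>y\<in>{a..b}. \<bar>f y\<bar> \<le> B0" "\<forall>y\<in>{a..b}. \<bar>f1 y\<bar> \<le> B1" "\<forall>y\<in>{a..b}. \<bar>f2 y\<bar> \<le> B2"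
    using bounded[of f] bounded[of f1] bounded[of f2] by blast
  then show ?thesis
    by (intro exI[of _ "max B0 (max B1 B2)"]) (auto simp: le_max_iff_disj)
qed

lemma nn_integral_inverse_square:
  assumes "0 \<le> K" and "0 < e"
  shows "(\<integral>\<^sup>+ s. ennreal (K * e^3 / (e + s)^2) * indicator {0..} s \<partial>lborel) = ennreal (K * e^2)"
proof -
  have "((\<lambda>s. K * e^3 / (e + s)) \<longlongrightarrow> 0) at_top"
    by (intro tendsto_divide_0[OF tendsto_const] filterlim_at_top_imp_at_infinity
        filterlim_tendsto_add_at_top[OF tendsto_const filterlim_ident])
  then have "((\<lambda>s. - (K * e^3 / (e + s))) \<longlongrightarrow> 0) at_top"
    using tendsto_minus by fastforce
  then have "(\<integral>\<^sup>+ s. ennreal (K * e^3 / (e + s)^2) * indicator {0..} s \<partial>lborel)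
      = ennreal (0 - (- (K * e^3 / (e + 0))))"
    using assms
    by (intro nn_integral_FTC_atLeast) (auto intro!: derivative_eq_intros simp: power2_eq_square)
  also have "\<dots> = ennreal (K * e^2)"
    using assms by (simp add: power2_eq_square power3_eq_cube)
  finally show ?thesis .
qed

locale advection_data =
  fixes M T :: real
    and y0 y0' y0'' y0''' y0'''' v v' v'' v''' v'''' :: "real \<Rightarrow> real"
  assumes M_pos: "M > 0"
    and T_ge: "T \<ge> 1 / M"
    and y0_C4: "C4_on {0..1} y0 y0' y0'' y0''' y0''''"
    and v_C4: "C4_on {0..T} v v' v'' v''' v''''"
begin

definition "cp = y0 0"
definition "cm = v 0"
definition "dp = y0' 0"
definition "dm = - v' 0 / M"
definition "ep = y0'' 0"
definition "em = v'' 0 / M^2"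
definition "fm = v'' 0 / M^3"
definition "hp = y0''' 0 / 6"
definition "hm = - v''' 0 / (6 * M^3)"
definition "y_outer0 x t = (if x > M * t then y0 (x - M * t) else v (t - x / M))"
definition "y_outer1 x t = (if x > M * t then t * y0'' (x - M * t) else x / M^3 * v'' (t - x / M))"
definition "dx_y_outer0 t = (if M * t < 1 then y0' (1 - M * t) else - v' (t - 1 / M) / M)"
definition "cs t = (if M * t \<le> 1 then cp else cm)"
definition "ds t = (if M * t \<le> 1 then dp else dm)"
definition "es t = (if M * t \<le> 1 then ep else em)"
definition "fs t = (if M * t \<le> 1 then 0 else fm)"
definition "hs t = (if M * t \<le> 1 then hp else hm)"
definition "M_tau e t = M * ((1 / M - t) / sqrt e)"

definition "a0 e t = y_outer0 1 t + W0e M e cp cm (M_tau e t) t - cs t"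
definition "a12 e t = W12 dp dm (M_tau e t) t - M_tau e t * ds t"
definition "b12 e t = deriv (\<lambda>w'. W0e M e cp cm w' t) (M_tau e t)"
definition "AA e t = y_outer1 1 t + W1 ep em (M_tau e t) t - es t * ((M_tau e t)^2 / 2 + t)"
definition "BB e t = - dx_y_outer0 t - deriv (\<lambda>w'. W12 dp dm w' t) (M_tau e t) + ds t"
definition "CC e t = (deriv ^^ 2) (\<lambda>w'. W0e M e cp cm w' t) (M_tau e t)"
definition "At e t = W32 hp hm fm (M_tau e t) t - hs t * ((M_tau e t)^3 + 6 * t * M_tau e t) - fs t * M_tau e t"
definition "Bt e t = - deriv (\<lambda>w'. W1 ep em w' t) (M_tau e t) + M_tau e t * es t"
definition "Ct e t = (deriv ^^ 2) (\<lambda>w'. W12 dp dm w' t) (M_tau e t)"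
definition "Dt e t = - (deriv ^^ 3) (\<lambda>w'. W0e M e cp cm w' t) (M_tau e t)"

definition "layer_bracket e t z = - a0 e t - sqrt e * (a12 e t + b12 e t * z)
   + e * (- AA e t + BB e t * z - CC e t * z^2 / 2)
   + e powr (3/2) * (- At e t + Bt e t * z - Ct e t * z^2 / 2 + Dt e t * z^3 / 6)"

definition "inner_part e t =
    (W0e M e cp cm ((0 - M * t) / sqrt e) t - cm)
    + sqrt e * (W12 dp dm ((0 - M * t) / sqrt e) t - dm * ((0 - M * t) / sqrt e))
    + e * (W1 ep em ((0 - M * t) / sqrt e) t - em * (((0 - M * t) / sqrt e)^2 / 2 + t))
    + e powr (3/2) * (W32 hp hm fm ((0 - M * t) / sqrt e) t
        - hm * (((0 - M * t) / sqrt e)^3 + 6 * t * ((0 - M * t) / sqrt e)) - fm * ((0 - M * t) / sqrt e))"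

lemma Ptilde_on_inflow_boundary:
  assumes "0 < t"
  shows "Ptilde M y0 y0' y0'' y0''' v v' v'' v''' e 0 t
    = v t + inner_part e t + exp (- M / e) * layer_bracket e t (1 / e)"
proof -
  have "\<not> 0 > M * t"
    using M_pos assms by (simp add: not_less)
  then show ?thesis
    unfolding Ptilde_def Let_def layer_bracket_def inner_part_def a0_def a12_def b12_def AA_def BB_def
      CC_def At_def Bt_def Ct_def Dt_def cp_def cm_def dp_def dm_def ep_def em_def fm_def hp_def hm_def
      y_outer0_def y_outer1_def dx_y_outer0_def cs_def ds_def es_def fs_def hs_def M_tau_def
    by (simp only: if_False if_P if_not_P) simp
qed

definition "param_dom = {0<..<1::real} \<times> {0<..T}"

definition "p_ratio x = sqrt (snd x) / sqrt (fst x)"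

definition "inner_profile x =
    (dp - dm) * (- (M/2) * p_ratio x * (p_ratio x * erfcx (M * p_ratio x / 2)) + p_ratio x / sqrt pi)
  + fst x * ((ep - em) / 2) * ((M^2 * p_ratio x^3 / 2 + p_ratio x) * (p_ratio x * erfcx (M * p_ratio x / 2))
      - M * p_ratio x^3 / sqrt pi)
  + (fst x)^2 * (hp - hm) * (- M * p_ratio x * (M^2 * p_ratio x^4 / 2 + 3 * p_ratio x^2)
      * (p_ratio x * erfcx (M * p_ratio x / 2)) + (4 * p_ratio x^3 + M^2 * p_ratio x^5) / sqrt pi)
  + fst x * fm * (- p_ratio x / sqrt pi + M * p_ratio x / 2 * (p_ratio x * erfcx (M * p_ratio x / 2)))"

lemma inner_part_eq:
  assumes "(e, t) \<in> param_dom"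
  shows "inner_part e t = e * (exp (- (M^2 / 4 * p_ratio (e, t) ^ 2)) * inner_profile (e, t))"
proof -
  have "0 < e"
    using assms by (simp add: param_dom_def)
  then obtain r where r: "0 < r" "e = r^2" "sqrt e = r"
    by (rule pos_as_square)
  define p where "p = sqrt t / r"
  have p: "0 < p" and t: "t = (r * p)^2" and p_ratio: "p_ratio (e, t) = p"
    using assms r by (auto simp: param_dom_def p_def p_ratio_def power_mult_distrib)
  show ?thesis
    unfolding inner_part_def inner_profile_def p_ratio fst_conv unfolding r(2) t
    by (simp only: W0e_on_inflow_boundary[OF r(1) p] W12_on_inflow_boundary[OF r(1) p]
        W1_on_inflow_boundary[OF r(1) p] W32_on_inflow_boundary[OF r(1) p])
      (simp add: algebra_simps)
qed

lemma p_ratio_nonneg: "\<forall>x\<in>param_dom. 0 \<le> p_ratio x"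
  by (auto simp: param_dom_def p_ratio_def)

lemma poly_bounded_eps: "\<forall>x\<in>param_dom. 0 \<le> B x \<Longrightarrow> poly_bounded B param_dom 0 fst"
  by (rule poly_bounded_boundedI[where C = 1]) (auto simp: param_dom_def)

lemma inner_profile_poly_bounded: "\<exists>N. poly_bounded p_ratio param_dom N inner_profile"
proof -
  have "\<forall>x\<in>param_dom. 0 \<le> M * p_ratio x / 2"
    using p_ratio_nonneg M_pos by auto
  note leaves = this p_ratio_nonneg poly_bounded_size[OF p_ratio_nonneg] poly_bounded_eps[OF p_ratio_nonneg]
  show ?thesis
    unfolding inner_profile_def[abs_def]
    by (intro exI) (rule leaves poly_bounded_erfcx poly_bounded_intros)+
qed

lemma inner_part_bound:
  "\<exists>K\<ge>0. \<forall>(e, t)\<in>param_dom. \<bar>inner_part e t\<bar> \<le> K * e^3 / (e + t)^2"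
proof -
  obtain N where "poly_bounded p_ratio param_dom N inner_profile"
    using inner_profile_poly_bounded by blast
  then obtain K where "0 \<le> K" and K: "\<forall>x\<in>param_dom.
      \<bar>exp (- (M^2 / 4 * p_ratio x ^ 2)) * inner_profile x\<bar> \<le> K / (1 + p_ratio x)^4"
    using poly_bounded_gaussian_decay[of p_ratio param_dom N inner_profile "M^2 / 4" 4] M_pos by auto
  have "\<bar>inner_part e t\<bar> \<le> K * e^3 / (e + t)^2" if et: "(e, t) \<in> param_dom" for e t
  proof -
    define p where "p = p_ratio (e, t)"
    have e: "0 < e" and t: "0 < t" and "0 \<le> p"
      using et by (auto simp: param_dom_def p_def p_ratio_def)
    have "(e + t) / e = 1 + p^2"
      using e t by (simp add: p_def p_ratio_def power_divide field_simps)
    also have "\<dots> \<le> (1 + p)^2"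
      using \<open>0 \<le> p\<close> by (simp add: power2_eq_square algebra_simps)
    finally have "((e + t) / e)^2 \<le> ((1 + p)^2)^2"
      using e t by (intro power_mono) auto
    then have "((e + t) / e)^2 \<le> (1 + p)^4"
      by (simp flip: power_mult)
    have "\<bar>inner_part e t\<bar> = e * \<bar>exp (- (M^2 / 4 * p^2)) * inner_profile (e, t)\<bar>"
      using inner_part_eq[OF et] e by (simp add: p_def abs_mult)
    also have "\<dots> \<le> e * (K / (1 + p)^4)"
      using K et e by (intro mult_left_mono) (auto simp: p_def)
    also have "\<dots> \<le> e * (K / ((e + t) / e)^2)"
      using \<open>((e + t) / e)^2 \<le> (1 + p)^4\<close> \<open>0 \<le> K\<close> \<open>0 \<le> p\<close> e t
      by (intro mult_left_mono divide_left_mono) (auto intro!: mult_pos_pos)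
    also have "\<dots> = K * e^3 / (e + t)^2"
      using e t by (simp add: field_simps power2_eq_square power3_eq_cube)
    finally show ?thesis .
  qed
  with \<open>0 \<le> K\<close> show ?thesis
    by blast
qed

subsection \<open>The boundary-layer term\<close>

definition "inv_sqrt_eps x = 1 / sqrt (fst x)"
definition "inv_two_sqrt_t x = 1 / (2 * sqrt (snd x))"
definition "M_tau_at x = M_tau (fst x) (snd x)"

text \<open>The argument \<open>M \<tau> / (2 \<surd>t) + M \<surd>t / \<surd>\<epsilon>\<close> of \<open>erfc\<close> in \<open>U0\<close> at the outflow boundary.\<close>

definition "layer_erfc_arg x = (1 + M * snd x) / (2 * sqrt (fst x) * sqrt (snd x))"

lemma layer_argument_identities:
  assumes e: "0 < e" and t: "0 < t"
  defines "m \<equiv> M_tau e t" and "b \<equiv> (1 + M * t) / (2 * sqrt e * sqrt t)"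
  shows "m / (2 * sqrt t) + M * sqrt t / sqrt e = b"
    and "m * (1 / (2 * sqrt t)) + M * sqrt t / sqrt e = b"
    and "M * m / sqrt e + M^2 * t / e = M / e"
    and "M / e + (m / (2 * sqrt t))^2 = b^2"
proof -
  obtain r where r: "0 < r" "e = r^2" "sqrt e = r"
    using e by (rule pos_as_square)
  obtain q where q: "0 < q" "t = q^2" "sqrt t = q"
    using t by (rule pos_as_square)
  have m: "m = (1 - M * q^2) / r" and b: "b = (1 + M * q^2) / (2 * r * q)"
    using M_pos r q by (simp_all add: m_def b_def M_tau_def field_simps)
  show "m / (2 * sqrt t) + M * sqrt t / sqrt e = b"
    and "m * (1 / (2 * sqrt t)) + M * sqrt t / sqrt e = b"
    and "M * m / sqrt e + M^2 * t / e = M / e"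
    and "M / e + (m / (2 * sqrt t))^2 = b^2"
    unfolding m b r(3) q(3) unfolding r(2) q(2)
    using r q by (simp_all add: field_simps power2_eq_square)
qed

text \<open>The factor \<open>exp (-M z) = exp (-M/\<epsilon>)\<close> of the boundary layer exactly cancels the growth
  of \<open>U0\<close> at \<open>w = M \<tau>\<close>, leaving a Gaussian in the erfc argument \<open>b\<close>.\<close>

lemma layer_exponential_identities:
  assumes e: "0 < e" and t: "0 < t"
  defines "m \<equiv> M_tau e t" and "b \<equiv> (1 + M * t) / (2 * sqrt e * sqrt t)"
  shows "exp (- M / e) * exp_layer M e t m = 1"
    and "exp (- M / e) * gauss_w t m = exp (- (b^2))"
    and "gauss_layer M e t m = exp (- (b^2))"
    and "erfc_layer M e t m = exp (- (b^2)) * erfcx b"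
proof -
  note A = layer_argument_identities[OF e t, folded m_def b_def]
  show "exp (- M / e) * exp_layer M e t m = 1"
    unfolding exp_layer_def A(3) by (simp flip: exp_add)
  show "exp (- M / e) * gauss_w t m = exp (- (b^2))"
    unfolding gauss_w_def A(4)[symmetric] by (simp flip: exp_add)
  show "gauss_layer M e t m = exp (- (b^2))"
    unfolding gauss_layer_def A(1) ..
  show "erfc_layer M e t m = exp (- (b^2)) * erfcx b"
    unfolding erfc_layer_def A(1) by (rule erfc_eq_erfcx)
qed

definition "b12_profile x = (cm - cp) / 2 * (- (2 / sqrt pi * inv_two_sqrt_t x))
   + (cm - cp) / 2 * (M * inv_sqrt_eps x * erfcx (layer_erfc_arg x) - 2 / sqrt pi * inv_two_sqrt_t x)"
definition "C_profile x = (cm - cp) / 2 * (2 * (2 / sqrt pi) * M_tau_at x * inv_two_sqrt_t x ^ 3)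
   + (cm - cp) / 2 * ((M * inv_sqrt_eps x) ^ 2 * erfcx (layer_erfc_arg x)
      - 2 * (M * inv_sqrt_eps x) * (2 / sqrt pi) * inv_two_sqrt_t x
      + 2 * (2 / sqrt pi) * layer_erfc_arg x * inv_two_sqrt_t x ^ 2)"
definition "Ct_profile x = (dp - dm) / 2 * (2 / sqrt pi * inv_two_sqrt_t x)"
definition "Dt_profile x =
   - ((cm - cp) / 2 * (2 * (2 / sqrt pi) * inv_two_sqrt_t x ^ 3 * (1 - 2 * M_tau_at x ^ 2 * inv_two_sqrt_t x ^ 2))
   + (cm - cp) / 2 * ((M * inv_sqrt_eps x) ^ 3 * erfcx (layer_erfc_arg x)
      - 3 * (M * inv_sqrt_eps x) ^ 2 * (2 / sqrt pi) * inv_two_sqrt_t x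
      + 6 * (M * inv_sqrt_eps x) * (2 / sqrt pi) * layer_erfc_arg x * inv_two_sqrt_t x ^ 2
      + 2 * (2 / sqrt pi) * (1 - 2 * layer_erfc_arg x ^ 2) * inv_two_sqrt_t x ^ 3))"
definition "B_closed x = - dx_y_outer0 (snd x)
   - ((dp - dm) / 2 * erf (M_tau_at x / (2 * sqrt (snd x))) + (dp + dm) / 2) + ds (snd x)"
definition "Bt_closed x = - (M_tau_at x * ((ep - em) / 2 * erf (M_tau_at x / (2 * sqrt (snd x))) + (ep + em) / 2)
     + (ep - em) * sqrt (snd x / pi) * exp (- (M_tau_at x ^ 2) / (4 * snd x))) + M_tau_at x * es (snd x)"

lemma layer_coefficients_closed_form:
  assumes "x \<in> param_dom"
  shows "BB (fst x) (snd x) = B_closed x" and "Bt (fst x) (snd x) = Bt_closed x"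
proof -
  have "0 < snd x"
    using assms by (auto simp: param_dom_def)
  then show "BB (fst x) (snd x) = B_closed x" and "Bt (fst x) (snd x) = Bt_closed x"
    by (simp_all add: BB_def B_closed_def Bt_def Bt_closed_def M_tau_at_def W12_derivs(1) W1_deriv)
qed

lemma layer_a0_rescaled:
  assumes "x \<in> param_dom"
  defines "e \<equiv> fst x" and "t \<equiv> snd x"
  shows "exp (- M / e) * a0 e t = exp (- M / e) * (y_outer0 1 t + W0 cp cm (M_tau_at x) t - cs t)
      + exp (- (layer_erfc_arg x ^ 2)) * ((cm - cp) / 2 * erfcx (layer_erfc_arg x))"
proof -
  have e: "0 < e" and t: "0 < t"
    using assms by (auto simp: param_dom_def e_def t_def)
  have b: "layer_erfc_arg x = (1 + M * t) / (2 * sqrt e * sqrt t)" and m: "M_tau_at x = M_tau e t"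
    by (simp_all add: layer_erfc_arg_def M_tau_at_def e_def t_def)
  note X = layer_exponential_identities[OF e t, folded b m]
  have "exp (- M / e) * a0 e t = exp (- M / e) * (y_outer0 1 t + W0 cp cm (M_tau_at x) t - cs t)
      + (cm - cp) / 2 * (exp (- M / e) * exp_layer M e t (M_tau_at x)) * erfc_layer M e t (M_tau_at x)"
    unfolding a0_def W0e_def U0_def exp_layer_def erfc_layer_def m by (simp add: algebra_simps)
  then show ?thesis
    unfolding X by simp
qed

lemma layer_coefficients_rescaled:
  assumes x: "x \<in> param_dom"
  defines "e \<equiv> fst x" and "t \<equiv> snd x"
  shows "exp (- M / e) * b12 e t = exp (- (layer_erfc_arg x ^ 2)) * b12_profile x"
    and "exp (- M / e) * CC e t = exp (- (layer_erfc_arg x ^ 2)) * C_profile x"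
    and "exp (- M / e) * Ct e t = exp (- (layer_erfc_arg x ^ 2)) * Ct_profile x"
    and "exp (- M / e) * Dt e t = exp (- (layer_erfc_arg x ^ 2)) * Dt_profile x"
proof -
  have e: "0 < e" and t: "0 < t"
    using x by (auto simp: param_dom_def e_def t_def)
  have b: "layer_erfc_arg x = (1 + M * t) / (2 * sqrt e * sqrt t)" and m: "M_tau_at x = M_tau e t"
    and i: "inv_two_sqrt_t x = 1 / (2 * sqrt t)" and l: "M * inv_sqrt_eps x = M / sqrt e"
    by (simp_all add: layer_erfc_arg_def M_tau_at_def inv_two_sqrt_t_def inv_sqrt_eps_def e_def t_def)
  note X = layer_exponential_identities[OF e t, folded b m]
  note A = layer_argument_identities[OF e t, folded b m]
  note W0e_d = W0e_derivs[OF e t, of M cp cm "M_tau_at x"]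
  let ?H = "exp (- M / e) * exp_layer M e t (M_tau_at x)"
    and ?gw = "exp (- M / e) * gauss_w t (M_tau_at x)"
    and ?erfcl = "erfc_layer M e t (M_tau_at x)" and ?gl = "gauss_layer M e t (M_tau_at x)"
    and ?i = "1 / (2 * sqrt t)" and ?\<kappa> = "2 / sqrt pi" and ?\<alpha> = "M / sqrt e"
  have "exp (- M / e) * b12 e t
      = (cm - cp) / 2 * (- (?\<kappa> * ?i * ?gw)) + (cm - cp) / 2 * (?H * (?\<alpha> * ?erfcl - ?\<kappa> * ?i * ?gl))"
    unfolding b12_def m[symmetric] W0e_d by (simp add: algebra_simps)
  then show "exp (- M / e) * b12 e t = exp (- (layer_erfc_arg x ^ 2)) * b12_profile x"
    unfolding X b12_profile_def i l by (simp add: algebra_simps)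
  have "exp (- M / e) * CC e t = (cm - cp) / 2 * (2 * ?\<kappa> * M_tau_at x * ?i^3 * ?gw)
      + (cm - cp) / 2 * (?H * (?\<alpha>^2 * ?erfcl - 2 * ?\<alpha> * ?\<kappa> * ?i * ?gl
        + 2 * ?\<kappa> * (M_tau_at x * ?i + M * sqrt t / sqrt e) * ?i^2 * ?gl))"
    unfolding CC_def m[symmetric] W0e_d by (simp add: algebra_simps)
  then show "exp (- M / e) * CC e t = exp (- (layer_erfc_arg x ^ 2)) * C_profile x"
    unfolding X A(2) C_profile_def i l by (simp add: algebra_simps)
  have "exp (- M / e) * Ct e t = (dp - dm) / 2 * (?\<kappa> * ?gw * ?i)"
    unfolding Ct_def m[symmetric] W12_derivs(2)[OF t] by (simp add: algebra_simps)
  then show "exp (- M / e) * Ct e t = exp (- (layer_erfc_arg x ^ 2)) * Ct_profile x"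
    unfolding X Ct_profile_def i by (simp add: algebra_simps)
  have "exp (- M / e) * Dt e t = - ((cm - cp) / 2 * (2 * ?\<kappa> * ?i^3 * (1 - 2 * M_tau_at x^2 * ?i^2) * ?gw)
      + (cm - cp) / 2 * (?H * (?\<alpha>^3 * ?erfcl - 3 * ?\<alpha>^2 * ?\<kappa> * ?i * ?gl
        + 6 * ?\<alpha> * ?\<kappa> * (M_tau_at x * ?i + M * sqrt t / sqrt e) * ?i^2 * ?gl
        + 2 * ?\<kappa> * (1 - 2 * (M_tau_at x * ?i + M * sqrt t / sqrt e)^2) * ?i^3 * ?gl)))"
    unfolding Dt_def m[symmetric] W0e_d by (simp add: algebra_simps)
  then show "exp (- M / e) * Dt e t = exp (- (layer_erfc_arg x ^ 2)) * Dt_profile x"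
    unfolding X A(2) Dt_profile_def i l by (simp add: algebra_simps)
qed

definition "layer_poly_part x = - (y_outer0 1 (snd x) + W0 cp cm (M_tau_at x) (snd x) - cs (snd x))
   - sqrt (fst x) * a12 (fst x) (snd x) - fst x * AA (fst x) (snd x) + B_closed x
   - fst x powr (3/2) * At (fst x) (snd x) + sqrt (fst x) * Bt_closed x"

definition "layer_gauss_part x = - ((cm - cp) / 2 * erfcx (layer_erfc_arg x)) - inv_sqrt_eps x * b12_profile x
   - inv_sqrt_eps x ^ 2 / 2 * C_profile x - inv_sqrt_eps x / 2 * Ct_profile x + inv_sqrt_eps x ^ 3 / 6 * Dt_profile x"

lemma layer_term_split:
  assumes x: "x \<in> param_dom"
  defines "e \<equiv> fst x" and "t \<equiv> snd x"
  shows "exp (- M / e) * layer_bracket e t (1 / e)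
    = exp (- M / e) * layer_poly_part x + exp (- (layer_erfc_arg x ^ 2)) * layer_gauss_part x"
proof -
  have "0 < e"
    using x by (auto simp: param_dom_def e_def)
  then obtain r where r: "0 < r" "e = r^2" "sqrt e = r"
    by (rule pos_as_square)
  have "exp (- M / e) * layer_bracket e t (1 / e) =
     - (exp (- M / e) * a0 e t) - sqrt e * (exp (- M / e) * a12 e t + (exp (- M / e) * b12 e t) / e)
     + e * (- (exp (- M / e) * AA e t) + BB e t * exp (- M / e) / e - (exp (- M / e) * CC e t) / e^2 / 2)
     + e powr (3/2) * (- (exp (- M / e) * At e t) + Bt e t * exp (- M / e) / e
        - (exp (- M / e) * Ct e t) / e^2 / 2 + (exp (- M / e) * Dt e t) / e^3 / 6)"
    by (simp add: layer_bracket_def algebra_simps power_one_over)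
  also have "\<dots> = exp (- M / e) * layer_poly_part x + exp (- (layer_erfc_arg x ^ 2)) * layer_gauss_part x"
    unfolding layer_a0_rescaled[OF x, folded e_def t_def] layer_coefficients_rescaled[OF x, folded e_def t_def]
      layer_coefficients_closed_form[OF x, folded e_def t_def]
      layer_poly_part_def layer_gauss_part_def inv_sqrt_eps_def e_def[symmetric] t_def[symmetric]
      r(3) powr_three_halves[OF r(1), folded r(2)]
    unfolding r(2) using r(1) by (simp add: field_simps power2_eq_square power3_eq_cube)
  finally show ?thesis .
qed

lemma data_bounded:
  "\<exists>B. (\<forall>y\<in>{0..1}. \<bar>y0 y\<bar> \<le> B \<and> \<bar>y0' y\<bar> \<le> B \<and> \<bar>y0'' y\<bar> \<le> B) \<and>
       (\<forall>y\<in>{0..T}. \<bar>v y\<bar> \<le> B \<and> \<bar>v' y\<bar> \<le> B \<and> \<bar>v'' y\<bar> \<le> B)"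
proof -
  obtain B1 where "\<forall>y\<in>{0..1}. \<bar>y0 y\<bar> \<le> B1 \<and> \<bar>y0' y\<bar> \<le> B1 \<and> \<bar>y0'' y\<bar> \<le> B1"
    using C4_on_bounded[OF y0_C4] by blast
  moreover obtain B2 where "\<forall>y\<in>{0..T}. \<bar>v y\<bar> \<le> B2 \<and> \<bar>v' y\<bar> \<le> B2 \<and> \<bar>v'' y\<bar> \<le> B2"
    using C4_on_bounded[OF v_C4] by blast
  ultimately show ?thesis
    by (intro exI[of _ "max B1 B2"]) (auto simp: le_max_iff_disj)
qed

lemma T_pos: "0 < T"
proof -
  have "0 < 1 / M"
    using M_pos by simp
  with T_ge show ?thesis
    by linarith
qed

lemma outer_terms_at_outflow_bounded:
  "\<exists>C. \<forall>t\<in>{0<..T}. \<bar>y_outer0 1 t\<bar> \<le> C \<and> \<bar>y_outer1 1 t\<bar> \<le> C \<and> \<bar>dx_y_outer0 t\<bar> \<le> C"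
proof -
  obtain B where B: "\<forall>y\<in>{0..1}. \<bar>y0 y\<bar> \<le> B \<and> \<bar>y0' y\<bar> \<le> B \<and> \<bar>y0'' y\<bar> \<le> B"
    "\<forall>y\<in>{0..T}. \<bar>v y\<bar> \<le> B \<and> \<bar>v' y\<bar> \<le> B \<and> \<bar>v'' y\<bar> \<le> B"
    using data_bounded by blast
  then have "0 \<le> B" by force
  define C where "C = (T + 1 + 1 / M + 1 / M^3) * B"
  have "\<bar>y_outer0 1 t\<bar> \<le> C \<and> \<bar>y_outer1 1 t\<bar> \<le> C \<and> \<bar>dx_y_outer0 t\<bar> \<le> C" if t: "t \<in> {0<..T}" for t
  proof (cases "M * t < 1")
    case True
    then have "1 - M * t \<in> {0..1}"
      using t M_pos by auto
    then have "\<bar>y0 (1 - M * t)\<bar> \<le> B" "\<bar>y0' (1 - M * t)\<bar> \<le> B" "\<bar>t * y0'' (1 - M * t)\<bar> \<le> T * B"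
      using B t \<open>0 \<le> B\<close> by (auto simp: abs_mult intro!: mult_mono)
    moreover have "B \<le> C" "T * B \<le> C"
      using \<open>0 \<le> B\<close> T_pos M_pos by (auto simp: C_def algebra_simps intro!: mult_right_mono)
    ultimately show ?thesis
      using True by (auto simp: y_outer0_def y_outer1_def dx_y_outer0_def)
  next
    case False
    then have "1 / M \<le> t"
      using M_pos by (simp add: field_simps)
    moreover have "t - 1 / M \<le> T"
    proof -
      have "0 < 1 / M" "t \<le> T"
        using t M_pos by simp_all
      then show ?thesis by linarith
    qed
    ultimately have "t - 1 / M \<in> {0..T}"
      by simp
    then have "\<bar>v (t - 1 / M)\<bar> \<le> B" "\<bar>v' (t - 1 / M) / M\<bar> \<le> B / M"
      "\<bar>1 / M^3 * v'' (t - 1 / M)\<bar> \<le> B / M^3"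
      using B M_pos by (auto simp: abs_mult divide_right_mono)
    moreover have "B \<le> C" "B / M \<le> C" "B / M^3 \<le> C"
      using \<open>0 \<le> B\<close> T_pos M_pos by (auto simp: C_def algebra_simps intro!: mult_right_mono)
    ultimately show ?thesis
      using False by (auto simp: y_outer0_def y_outer1_def dx_y_outer0_def abs_minus_commute)
  qed
  then show ?thesis
    by blast
qed

lemma inv_sqrt_eps_nonneg: "\<forall>x\<in>param_dom. 0 \<le> inv_sqrt_eps x"
  by (auto simp: param_dom_def inv_sqrt_eps_def)

lemma layer_erfc_arg_nonneg: "\<forall>x\<in>param_dom. 0 \<le> layer_erfc_arg x"
  using M_pos by (auto simp: param_dom_def layer_erfc_arg_def)

lemma poly_bounded_cong:
  "(\<And>x. x \<in> D \<Longrightarrow> f x = g x) \<Longrightarrow> poly_bounded B D N f \<longleftrightarrow> poly_bounded B D N g"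
  unfolding poly_bounded_def by auto

lemma poly_bounded_M_tau_at:
  assumes "poly_bounded B param_dom 1 inv_sqrt_eps"
  shows "poly_bounded B param_dom 1 M_tau_at"
proof -
  have B: "\<forall>x\<in>param_dom. 0 \<le> B x"
    using assms by (simp add: poly_bounded_def)
  have "poly_bounded B param_dom 0 (\<lambda>x. 1 - M * snd x)"
  proof (rule poly_bounded_boundedI[OF B])
    fix x assume "x \<in> param_dom"
    then have "0 \<le> M * snd x" "M * snd x \<le> M * T"
      using M_pos by (auto simp: param_dom_def intro: mult_left_mono)
    then show "\<bar>1 - M * snd x\<bar> \<le> 1 + M * T"
      by (simp add: abs_le_iff)
  qed
  from poly_bounded_mult[OF this assms]
  have "poly_bounded B param_dom 1 (\<lambda>x. (1 - M * snd x) * inv_sqrt_eps x)"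
    by simp
  moreover have "(1 - M * snd x) * inv_sqrt_eps x = M_tau_at x" if "x \<in> param_dom" for x
    using that M_pos by (auto simp: param_dom_def M_tau_at_def M_tau_def inv_sqrt_eps_def field_simps)
  ultimately show ?thesis
    using poly_bounded_cong[of param_dom "\<lambda>x. (1 - M * snd x) * inv_sqrt_eps x" M_tau_at B 1] by simp
qed

lemma poly_bounded_inv_sqrt_eps_leaves:
  "poly_bounded inv_sqrt_eps param_dom 0 (\<lambda>x. y_outer0 1 (snd x))"
  "poly_bounded inv_sqrt_eps param_dom 0 (\<lambda>x. y_outer1 1 (snd x))"
  "poly_bounded inv_sqrt_eps param_dom 0 (\<lambda>x. dx_y_outer0 (snd x))"
  "poly_bounded inv_sqrt_eps param_dom 0 (\<lambda>x. cs (snd x))"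
  "poly_bounded inv_sqrt_eps param_dom 0 (\<lambda>x. ds (snd x))"
  "poly_bounded inv_sqrt_eps param_dom 0 (\<lambda>x. es (snd x))"
  "poly_bounded inv_sqrt_eps param_dom 0 (\<lambda>x. fs (snd x))"
  "poly_bounded inv_sqrt_eps param_dom 0 (\<lambda>x. hs (snd x))"
  "poly_bounded inv_sqrt_eps param_dom 0 snd"
  "poly_bounded inv_sqrt_eps param_dom 0 (\<lambda>x. sqrt (snd x / pi))"
  "poly_bounded inv_sqrt_eps param_dom 0 (\<lambda>x. sqrt (fst x))"
  "poly_bounded inv_sqrt_eps param_dom 0 (\<lambda>x. fst x powr (3/2))"
  "poly_bounded inv_sqrt_eps param_dom 1 M_tau_at"
proof -
  obtain C where C: "\<forall>t\<in>{0<..T}. \<bar>y_outer0 1 t\<bar> \<le> C \<and> \<bar>y_outer1 1 t\<bar> \<le> C \<and> \<bar>dx_y_outer0 t\<bar> \<le> C"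
    using outer_terms_at_outflow_bounded by blast
  note bounded = poly_bounded_boundedI[OF inv_sqrt_eps_nonneg]
  show "poly_bounded inv_sqrt_eps param_dom 0 (\<lambda>x. y_outer0 1 (snd x))"
    by (rule bounded[where C = C]) (use C in \<open>auto simp: param_dom_def\<close>)
  show "poly_bounded inv_sqrt_eps param_dom 0 (\<lambda>x. y_outer1 1 (snd x))"
    by (rule bounded[where C = C]) (use C in \<open>auto simp: param_dom_def\<close>)
  show "poly_bounded inv_sqrt_eps param_dom 0 (\<lambda>x. dx_y_outer0 (snd x))"
    by (rule bounded[where C = C]) (use C in \<open>auto simp: param_dom_def\<close>)
  show "poly_bounded inv_sqrt_eps param_dom 0 (\<lambda>x. cs (snd x))"
    "poly_bounded inv_sqrt_eps param_dom 0 (\<lambda>x. ds (snd x))"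
    "poly_bounded inv_sqrt_eps param_dom 0 (\<lambda>x. es (snd x))"
    "poly_bounded inv_sqrt_eps param_dom 0 (\<lambda>x. fs (snd x))"
    "poly_bounded inv_sqrt_eps param_dom 0 (\<lambda>x. hs (snd x))"
    by (auto simp: cs_def ds_def es_def fs_def hs_def
        intro!: bounded[where C = "\<bar>cp\<bar> + \<bar>cm\<bar> + \<bar>dp\<bar> + \<bar>dm\<bar> + \<bar>ep\<bar> + \<bar>em\<bar> + \<bar>fm\<bar> + \<bar>hp\<bar> + \<bar>hm\<bar>"])
  show "poly_bounded inv_sqrt_eps param_dom 0 snd"
    by (rule bounded[where C = T]) (auto simp: param_dom_def)
  show "poly_bounded inv_sqrt_eps param_dom 0 (\<lambda>x. sqrt (snd x / pi))"
  proof (rule bounded[where C = "sqrt T"])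
    fix x assume "x \<in> param_dom"
    then have t: "0 \<le> snd x" "snd x \<le> T"
      by (auto simp: param_dom_def)
    then have "snd x / pi \<le> snd x / 1"
      using pi_gt3 by (intro divide_left_mono) auto
    with t have "snd x / pi \<le> T" and "0 \<le> snd x / pi"
      by auto
    then show "\<bar>sqrt (snd x / pi)\<bar> \<le> sqrt T"
      by simp
  qed
  show "poly_bounded inv_sqrt_eps param_dom 0 (\<lambda>x. sqrt (fst x))"
    by (rule bounded[where C = 1]) (auto simp: param_dom_def)
  show "poly_bounded inv_sqrt_eps param_dom 0 (\<lambda>x. fst x powr (3/2))"
    by (rule bounded[where C = 1]) (auto simp: param_dom_def powr_le1)
  show "poly_bounded inv_sqrt_eps param_dom 1 M_tau_at"
    by (intro poly_bounded_M_tau_at poly_bounded_size inv_sqrt_eps_nonneg)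
qed

lemma layer_poly_part_poly_bounded: "\<exists>N. poly_bounded inv_sqrt_eps param_dom N layer_poly_part"
proof -
  have "\<forall>x\<in>param_dom. 0 < 4 * snd x"
    by (auto simp: param_dom_def)
  note leaves = this inv_sqrt_eps_nonneg poly_bounded_inv_sqrt_eps_leaves
    poly_bounded_eps[OF inv_sqrt_eps_nonneg] poly_bounded_erf[OF inv_sqrt_eps_nonneg]
    poly_bounded_erfc[OF inv_sqrt_eps_nonneg] poly_bounded_exp_neg_square_div[OF inv_sqrt_eps_nonneg]
  show ?thesis
    unfolding layer_poly_part_def[abs_def] a12_def AA_def At_def W0_def B_closed_def Bt_closed_def
      W12_def W1_def W32_def M_tau_at_def[symmetric]
    by (intro exI) (rule leaves poly_bounded_intros)+
qed

lemma sqrt_M_inv_sqrt_eps_le: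
  assumes "x \<in> param_dom"
  shows "sqrt M * inv_sqrt_eps x \<le> layer_erfc_arg x"
proof -
  define r where "r = sqrt (fst x)"
  then have r: "0 < r" "sqrt (fst x) = r"
    using assms by (auto simp: param_dom_def)
  have "0 < snd x"
    using assms by (auto simp: param_dom_def)
  then obtain q where q: "0 < q" "snd x = q^2" "sqrt (snd x) = q"
    by (rule pos_as_square)
  have "0 \<le> (sqrt M * q - 1)^2"
    by simp
  then have "2 * sqrt M * q \<le> 1 + M * q^2"
    using M_pos by (simp add: power2_eq_square algebra_simps)
  then have "sqrt M / r \<le> (1 + M * q^2) / (2 * r * q)"
    using r q by (simp add: field_simps)
  then show ?thesis
    using q by (simp add: inv_sqrt_eps_def layer_erfc_arg_def r q)
qed

lemma poly_bounded_layer_erfc_arg_leaves: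
  "poly_bounded layer_erfc_arg param_dom 1 inv_sqrt_eps"
  "poly_bounded layer_erfc_arg param_dom 1 inv_two_sqrt_t"
  "poly_bounded layer_erfc_arg param_dom 1 M_tau_at"
proof -
  show inv_sqrt_eps: "poly_bounded layer_erfc_arg param_dom 1 inv_sqrt_eps"
  proof (rule poly_bounded_linearI[OF layer_erfc_arg_nonneg, where C = "1 / sqrt M"])
    fix x assume x: "x \<in> param_dom"
    have "\<bar>inv_sqrt_eps x\<bar> \<le> layer_erfc_arg x / sqrt M"
      using sqrt_M_inv_sqrt_eps_le[OF x] inv_sqrt_eps_nonneg x M_pos by (simp add: field_simps)
    also have "\<dots> \<le> 1 / sqrt M * (1 + layer_erfc_arg x)"
      using M_pos by (simp add: field_simps)
    finally show "\<bar>inv_sqrt_eps x\<bar> \<le> 1 / sqrt M * (1 + layer_erfc_arg x)" .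
  qed
  show "poly_bounded layer_erfc_arg param_dom 1 inv_two_sqrt_t"
  proof (rule poly_bounded_linearI[OF layer_erfc_arg_nonneg, where C = 1])
    fix x assume x: "x \<in> param_dom"
    define r q where "r = sqrt (fst x)" and "q = sqrt (snd x)"
    then have r: "0 < r" "r \<le> 1" "sqrt (fst x) = r" and q: "0 < q" "snd x = q^2"
      using x by (auto simp: param_dom_def)
    have "1 / (2 * q) \<le> 1 / (2 * r * q)"
      using r q by (intro divide_left_mono) (auto intro: mult_right_le_one_le)
    also have "\<dots> \<le> (1 + M * q^2) / (2 * r * q)"
      using r q M_pos by (intro divide_right_mono) auto
    finally have "inv_two_sqrt_t x \<le> layer_erfc_arg x"
      using q by (simp add: inv_two_sqrt_t_def layer_erfc_arg_def r(3))
    moreover have "0 \<le> inv_two_sqrt_t x"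
      using q by (simp add: inv_two_sqrt_t_def)
    ultimately show "\<bar>inv_two_sqrt_t x\<bar> \<le> 1 * (1 + layer_erfc_arg x)"
      by simp
  qed
  show "poly_bounded layer_erfc_arg param_dom 1 M_tau_at"
    using inv_sqrt_eps by (rule poly_bounded_M_tau_at)
qed

lemma layer_gauss_part_poly_bounded: "\<exists>N. poly_bounded layer_erfc_arg param_dom N layer_gauss_part"
proof -
  note leaves = layer_erfc_arg_nonneg poly_bounded_layer_erfc_arg_leaves
    poly_bounded_erfcx[OF layer_erfc_arg_nonneg layer_erfc_arg_nonneg] poly_bounded_size[OF layer_erfc_arg_nonneg]
  show ?thesis
    unfolding layer_gauss_part_def[abs_def] b12_profile_def C_profile_def Ct_profile_def Dt_profile_def
    by (intro exI) (rule leaves poly_bounded_intros)+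
qed

lemma exp_neg_M_over_eps_poly_bounded_le:
  assumes "poly_bounded inv_sqrt_eps param_dom N g"
  shows "\<exists>K\<ge>0. \<forall>x\<in>param_dom. \<bar>exp (- M / fst x) * g x\<bar> \<le> K * fst x ^ 3"
proof -
  obtain K where "0 \<le> K" and K: "\<forall>x\<in>param_dom.
      \<bar>exp (- (M * inv_sqrt_eps x ^ 2)) * g x\<bar> \<le> K / (1 + inv_sqrt_eps x)^6"
    using poly_bounded_gaussian_decay[OF assms M_pos] by blast
  have "\<bar>exp (- M / fst x) * g x\<bar> \<le> K * fst x ^ 3" if x: "x \<in> param_dom" for x
  proof -
    have e: "0 < fst x" and L: "0 < inv_sqrt_eps x"
      using x by (auto simp: param_dom_def inv_sqrt_eps_def)
    have L2: "inv_sqrt_eps x ^ 2 = 1 / fst x"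
      using e by (simp add: inv_sqrt_eps_def power_divide)
    have "\<bar>exp (- M / fst x) * g x\<bar> \<le> K / (1 + inv_sqrt_eps x)^6"
      using K x L2 by auto
    also have "\<dots> \<le> K / inv_sqrt_eps x ^ 6"
      using \<open>0 \<le> K\<close> L by (intro divide_left_mono power_mono) auto
    also have "\<dots> = K * fst x ^ 3"
    proof -
      have "inv_sqrt_eps x ^ 6 = (inv_sqrt_eps x ^ 2) ^ 3"
        by (simp flip: power_mult)
      then show ?thesis
        unfolding L2 by (simp add: power_one_over)
    qed
    finally show ?thesis .
  qed
  with \<open>0 \<le> K\<close> show ?thesis
    by blast
qed

lemma exp_neg_layer_erfc_arg_poly_bounded_le:
  assumes "poly_bounded layer_erfc_arg param_dom N g"
  shows "\<exists>K\<ge>0. \<forall>x\<in>param_dom. \<bar>exp (- (layer_erfc_arg x ^ 2)) * g x\<bar> \<le> K * fst x ^ 3"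
proof -
  obtain K where "0 \<le> K" and K: "\<forall>x\<in>param_dom.
      \<bar>exp (- (1 * layer_erfc_arg x ^ 2)) * g x\<bar> \<le> K / (1 + layer_erfc_arg x)^6"
    using poly_bounded_gaussian_decay[OF assms, of 1] by auto
  have "\<bar>exp (- (layer_erfc_arg x ^ 2)) * g x\<bar> \<le> K / M^3 * fst x ^ 3" if x: "x \<in> param_dom" for x
  proof -
    have e: "0 < fst x"
      using x by (auto simp: param_dom_def)
    have "M / fst x = (sqrt M * inv_sqrt_eps x)^2"
      using M_pos e by (simp add: inv_sqrt_eps_def power_mult_distrib power_divide)
    also have "\<dots> \<le> layer_erfc_arg x ^ 2"
      using sqrt_M_inv_sqrt_eps_le[OF x] M_pos e by (intro power_mono) (auto simp: inv_sqrt_eps_def)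
    finally have "(M / fst x)^3 \<le> (layer_erfc_arg x ^ 2)^3"
      using M_pos e by (intro power_mono) auto
    also have "\<dots> \<le> (1 + layer_erfc_arg x)^6"
      using layer_erfc_arg_nonneg x by (simp flip: power_mult)
    finally have "(M / fst x)^3 \<le> (1 + layer_erfc_arg x)^6" .
    then have "K / (1 + layer_erfc_arg x)^6 \<le> K / (M / fst x)^3"
      using \<open>0 \<le> K\<close> M_pos e layer_erfc_arg_nonneg x
      by (intro divide_left_mono) (auto intro!: mult_pos_pos simp: add_pos_nonneg)
    also have "\<dots> = K / M^3 * fst x ^ 3"
      by (simp add: power_divide)
    finally show ?thesis
      using K x by (auto intro: order_trans)
  qed
  with \<open>0 \<le> K\<close> M_pos show ?thesis
    by (intro exI[of _ "K / M^3"]) auto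
qed

lemma layer_term_bound:
  "\<exists>K\<ge>0. \<forall>(e, t)\<in>param_dom. \<bar>exp (- M / e) * layer_bracket e t (1 / e)\<bar> \<le> K * e^3 / (e + t)^2"
proof -
  obtain N1 N2 where "poly_bounded inv_sqrt_eps param_dom N1 layer_poly_part"
    and "poly_bounded layer_erfc_arg param_dom N2 layer_gauss_part"
    using layer_poly_part_poly_bounded layer_gauss_part_poly_bounded by blast
  then obtain K1 K2 where "0 \<le> K1" "0 \<le> K2"
    and K1: "\<forall>x\<in>param_dom. \<bar>exp (- M / fst x) * layer_poly_part x\<bar> \<le> K1 * fst x ^ 3"
    and K2: "\<forall>x\<in>param_dom. \<bar>exp (- (layer_erfc_arg x ^ 2)) * layer_gauss_part x\<bar> \<le> K2 * fst x ^ 3"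
    by (metis exp_neg_M_over_eps_poly_bounded_le exp_neg_layer_erfc_arg_poly_bounded_le)
  have "\<bar>exp (- M / e) * layer_bracket e t (1 / e)\<bar> \<le> (K1 + K2) * (1 + T)^2 * e^3 / (e + t)^2"
    if et: "(e, t) \<in> param_dom" for e t
  proof -
    have e: "0 < e" "e < 1" and t: "0 < t" "t \<le> T"
      using et by (auto simp: param_dom_def)
    have "\<bar>exp (- M / e) * layer_bracket e t (1 / e)\<bar> \<le> K1 * e^3 + K2 * e^3"
      using layer_term_split[OF et] K1 K2 et by (auto intro!: abs_triangle_ineq[THEN order_trans] add_mono)
    also have "\<dots> = (K1 + K2) * e^3 * 1"
      by (simp add: algebra_simps)
    also have "\<dots> \<le> (K1 + K2) * e^3 * ((1 + T)^2 / (e + t)^2)"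
    proof (rule mult_left_mono)
      have "(e + t)^2 \<le> (1 + T)^2"
        using e t by (intro power_mono) auto
      then show "1 \<le> (1 + T)^2 / (e + t)^2"
        using e t by simp
    qed (use \<open>0 \<le> K1\<close> \<open>0 \<le> K2\<close> e in auto)
    finally show ?thesis
      by (simp add: mult_ac)
  qed
  with \<open>0 \<le> K1\<close> \<open>0 \<le> K2\<close> show ?thesis
    by (intro exI[of _ "(K1 + K2) * (1 + T)^2"]) auto
qed

lemma Ptilde_minus_v_bound:
  "\<exists>K\<ge>0. \<forall>(e, t)\<in>param_dom.
     \<bar>Ptilde M y0 y0' y0'' y0''' v v' v'' v''' e 0 t - v t\<bar> \<le> K * e^3 / (e + t)^2"
proof -
  obtain K1 K2 where "0 \<le> K1" "0 \<le> K2"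
    and K1: "\<forall>(e, t)\<in>param_dom. \<bar>inner_part e t\<bar> \<le> K1 * e^3 / (e + t)^2"
    and K2: "\<forall>(e, t)\<in>param_dom. \<bar>exp (- M / e) * layer_bracket e t (1 / e)\<bar> \<le> K2 * e^3 / (e + t)^2"
    using inner_part_bound layer_term_bound by blast
  have "\<bar>Ptilde M y0 y0' y0'' y0''' v v' v'' v''' e 0 t - v t\<bar> \<le> (K1 + K2) * e^3 / (e + t)^2"
    if et: "(e, t) \<in> param_dom" for e t
  proof -
    have "0 < t"
      using et by (simp add: param_dom_def)
    then have "\<bar>Ptilde M y0 y0' y0'' y0''' v v' v'' v''' e 0 t - v t\<bar>
        \<le> \<bar>inner_part e t\<bar> + \<bar>exp (- M / e) * layer_bracket e t (1 / e)\<bar>"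
      by (simp add: Ptilde_on_inflow_boundary abs_triangle_ineq)
    also have "\<dots> \<le> K1 * e^3 / (e + t)^2 + K2 * e^3 / (e + t)^2"
      using K1 K2 et by (auto intro: add_mono)
    finally show ?thesis
      by (simp add: add_divide_distrib distrib_right)
  qed
  with \<open>0 \<le> K1\<close> \<open>0 \<le> K2\<close> show ?thesis
    by (intro exI[of _ "K1 + K2"]) auto
qed

lemma inflow_error_L1_bound:
  "\<exists>c::real. \<forall>eps y \<theta>.
           0 < eps \<and> eps < 1 \<and>
           adv_diff_sol eps M T v (\<lambda>_. 0) y0 y \<and>
           adv_diff_sol eps M T (\<lambda>_. 0) (\<lambda>_. 0)
             (\<lambda>x. Lim (at_right 0) (\<lambda>t. Ptilde M y0 y0' y0'' y0''' v v' v'' v''' eps x t) - y0 x) \<theta>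
           \<longrightarrow> (\<forall>t\<in>{0<..T}.
                 (\<integral>\<^sup>+ s\<in>{0<..<t}. ennreal \<bar>Ptilde M y0 y0' y0'' y0''' v v' v'' v''' eps 0 s
                                          - y 0 s - \<theta> 0 s\<bar> \<partial>lborel)
                 \<le> ennreal (c * eps^2))"
proof -
  obtain K where "0 \<le> K" and K: "\<forall>(e, t)\<in>param_dom.
      \<bar>Ptilde M y0 y0' y0'' y0''' v v' v'' v''' e 0 t - v t\<bar> \<le> K * e^3 / (e + t)^2"
    using Ptilde_minus_v_bound by blast
  show ?thesis
  proof (intro exI[of _ K] allI impI ballI)
    fix eps y \<theta> t
    assume sol: "0 < eps \<and> eps < 1 \<and> adv_diff_sol eps M T v (\<lambda>_. 0) y0 y \<and>
           adv_diff_sol eps M T (\<lambda>_. 0) (\<lambda>_. 0)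
             (\<lambda>x. Lim (at_right 0) (\<lambda>t. Ptilde M y0 y0' y0'' y0''' v v' v'' v''' eps x t) - y0 x) \<theta>"
      and t: "t \<in> {0<..T}"
    have boundary: "y 0 s = v s" "\<theta> 0 s = 0" if "s \<in> {0<..T}" for s
      using sol that unfolding adv_diff_sol_def by auto
    have "(\<integral>\<^sup>+ s\<in>{0<..<t}. ennreal \<bar>Ptilde M y0 y0' y0'' y0''' v v' v'' v''' eps 0 s - y 0 s - \<theta> 0 s\<bar> \<partial>lborel)
        \<le> (\<integral>\<^sup>+ s. ennreal (K * eps^3 / (eps + s)^2) * indicator {0..} s \<partial>lborel)"
    proof (rule nn_integral_mono)
      fix s
      show "ennreal \<bar>Ptilde M y0 y0' y0'' y0''' v v' v'' v''' eps 0 s - y 0 s - \<theta> 0 s\<bar> * indicator {0<..<t} s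
         \<le> ennreal (K * eps^3 / (eps + s)^2) * indicator {0..} s"
        using K sol t boundary[of s] by (auto simp: param_dom_def indicator_def intro: ennreal_leI)
    qed
    also have "\<dots> = ennreal (K * eps^2)"
      using nn_integral_inverse_square \<open>0 \<le> K\<close> sol by auto
    finally show "(\<integral>\<^sup>+ s\<in>{0<..<t}. ennreal \<bar>Ptilde M y0 y0' y0'' y0''' v v' v'' v''' eps 0 s
        - y 0 s - \<theta> 0 s\<bar> \<partial>lborel) \<le> ennreal (K * eps^2)" .
  qed
qed

end

theorem lemma4p4:
  fixes M T :: real
    and y0 y0' y0'' y0''' y0'''' v v' v'' v''' v'''' :: "real \<Rightarrow> real"
  assumes M_pos: "M > 0"
    and T_ge: "T \<ge> 1 / M"
    and y0_C4: "C4_on {0..1} y0 y0' y0'' y0''' y0''''"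
    and v_C4: "C4_on {0..T} v v' v'' v''' v''''"
  shows "\<exists>c::real. \<forall>eps y \<theta>.
           0 < eps \<and> eps < 1 \<and>
           adv_diff_sol eps M T v (\<lambda>_. 0) y0 y \<and>
           adv_diff_sol eps M T (\<lambda>_. 0) (\<lambda>_. 0)
             (\<lambda>x. Lim (at_right 0) (\<lambda>t. Ptilde M y0 y0' y0'' y0''' v v' v'' v''' eps x t) - y0 x) \<theta>
           \<longrightarrow> (\<forall>t\<in>{0<..T}.
                 (\<integral>\<^sup>+ s\<in>{0<..<t}. ennreal \<bar>Ptilde M y0 y0' y0'' y0''' v v' v'' v''' eps 0 s
                                          - y 0 s - \<theta> 0 s\<bar> \<partial>lborel)
                 \<le> ennreal (c * eps^2))"
proof -
  interpret advection_data M T y0 y0' y0'' y0''' y0'''' v v' v'' v''' v''''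
    using assms by unfold_locales
  show ?thesis
    by (rule inflow_error_L1_bound)
qed

end
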